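(* Let $F\colon \mathcal{D}_1 \to \mathcal{D}_2$ be a symmetric monoidal dagger functor between fermionically dagger compact categories such that every iso-positive involution in $\mathcal{D}_2$ is the identity. Then $F$ is $B\mathbb{Z}/2$-equivariant, i.e. $F((-1)^F_{x}) = (-1)^F_{F(x)}$ for every object $x$ of $\mathcal{D}_1$.
   Context: A dagger category is a category $\mathcal{D}$ with a contravariant strict involution $\dagger\colon \mathcal{D}\to\mathcal{D}^{\mathrm{op}}$ that is the identity on objects. A symmetric monoidal dagger category is a dagger category that is also symmetric monoidal such that $\otimes$ is a $\dagger$-functor and the unitors, associator and braiding $\sigma$ are unitary ($f^\dagger=f^{-1}$). A symmetric monoidal dagger functor is a symmetric monoidal functor $F$ that is a dagger functor ($F(f^\dagger)=F(f)^\dagger$) and whose structure isomorphisms $F(c_1)\otimes F(c_2)\to F(c_1\otimes c_2)$ and $1\to F(1)$ are unitary. Each $\mathcal{D}_i$ comes with a unitary monoidal $B\mathbb{Z}/2$-action, i.e. a monoidal natural involution $(-1)^F\colon \mathrm{id}\Rightarrow \mathrm{id}$ of the identity functor with each component unitary. An endomorphism $f\colon c\to c$ is iso-positive if $f=g^\dagger g$ for some isomorphism $g\colon c\to c'$. A symmetric monoidal dagger category $\mathcal{D}$ with such a $B\mathbb{Z}/2$-action is fermionically dagger compact if it has duals and, for every object $x$, the standard dual functor of its Hermitian completion sends $x$ (with trivial Hermitian pairing) to a dual whose dual Hermitian pairing, after twisting by $(-1)^F_{x^*}$, is again iso-positive; equivalently (as stated in the paper), every object $x$ admits a duality $\mathrm{ev}_x\colon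 x^*\otimes x\to 1$, $\mathrm{coev}_x\colon 1\to x\otimes x^*$ such that $\sigma_{x^*,x}\circ \mathrm{ev}_x^\dagger = ((-1)^F_x\otimes \mathrm{id}_{x^*})\circ \mathrm{coev}_x$. *)

theory Defs
  imports Main
begin

text \<open>A symmetric monoidal dagger category with a B Z/2-action, encoded concretely:
objects of type 'o, morphisms of type 'm, hom-sets, composition (cmp g f = g after f),
identities, dagger, tensor on objects and morphisms, unit object, associator
asc a b c : (a*b)*c -> a*(b*c), left unitor lun a : 1*a -> a, right unitor
run a : a*1 -> a, braiding brd a b : a*b -> b*a, and the fermion parity par a : a -> a.\<close>

record ('o, 'm) dcat =
  Obj :: "'o set"
  Hom :: "'o \<Rightarrow> 'o \<Rightarrow> 'm set"
  cmp :: "'m \<Rightarrow> 'm \<Rightarrow> 'm"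
  idm :: "'o \<Rightarrow> 'm"
  dag :: "'m \<Rightarrow> 'm"
  tno :: "'o \<Rightarrow> 'o \<Rightarrow> 'o"
  tnm :: "'m \<Rightarrow> 'm \<Rightarrow> 'm"
  unt :: "'o"
  asc :: "'o \<Rightarrow> 'o \<Rightarrow> 'o \<Rightarrow> 'm"
  lun :: "'o \<Rightarrow> 'm"
  run :: "'o \<Rightarrow> 'm"
  brd :: "'o \<Rightarrow> 'o \<Rightarrow> 'm"
  par :: "'o \<Rightarrow> 'm"

definition is_category :: "('o, 'm, 'x) dcat_scheme \<Rightarrow> bool" where
  "is_category C \<longleftrightarrow>
    (\<forall>a b f. f \<in> Hom C a b \<longrightarrow> a \<in> Obj C \<and> b \<in> Obj C) \<and>
    (\<forall>a \<in> Obj C. idm C a \<in> Hom C a a) \<and>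
    (\<forall>a b c f g. f \<in> Hom C a b \<longrightarrow> g \<in> Hom C b c \<longrightarrow> cmp C g f \<in> Hom C a c) \<and>
    (\<forall>a b f. f \<in> Hom C a b \<longrightarrow> cmp C (idm C b) f = f \<and> cmp C f (idm C a) = f) \<and>
    (\<forall>a b c d f g h. f \<in> Hom C a b \<longrightarrow> g \<in> Hom C b c \<longrightarrow> h \<in> Hom C c d \<longrightarrow>
        cmp C h (cmp C g f) = cmp C (cmp C h g) f)"

definition is_dagger_category :: "('o, 'm, 'x) dcat_scheme \<Rightarrow> bool" where
  "is_dagger_category C \<longleftrightarrow> is_category C \<and>
    (\<forall>a b f. f \<in> Hom C a b \<longrightarrow> dag C f \<in> Hom C b a \<and> dag C (dag C f) = f) \<and>
    (\<forall>a b c f g. f \<in> Hom C a b \<longrightarrow> g \<in> Hom C b c \<longrightarrow>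
        dag C (cmp C g f) = cmp C (dag C f) (dag C g)) \<and>
    (\<forall>a \<in> Obj C. dag C (idm C a) = idm C a)"

definition unitary :: "('o, 'm, 'x) dcat_scheme \<Rightarrow> 'm \<Rightarrow> 'o \<Rightarrow> 'o \<Rightarrow> bool" where
  "unitary C f a b \<longleftrightarrow> f \<in> Hom C a b \<and>
     cmp C (dag C f) f = idm C a \<and> cmp C f (dag C f) = idm C b"

definition iso :: "('o, 'm, 'x) dcat_scheme \<Rightarrow> 'm \<Rightarrow> 'o \<Rightarrow> 'o \<Rightarrow> bool" where
  "iso C g a b \<longleftrightarrow> g \<in> Hom C a b \<and>
     (\<exists>h \<in> Hom C b a. cmp C h g = idm C a \<and> cmp C g h = idm C b)"

definition iso_positive :: "('o, 'm, 'x) dcat_scheme \<Rightarrow> 'm \<Rightarrow> 'o \<Rightarrow> bool" where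
  "iso_positive C f c \<longleftrightarrow> f \<in> Hom C c c \<and>
     (\<exists>c' g. iso C g c c' \<and> f = cmp C (dag C g) g)"

definition is_sym_monoidal_dagger_category :: "('o, 'm, 'x) dcat_scheme \<Rightarrow> bool" where
  "is_sym_monoidal_dagger_category C \<longleftrightarrow> is_dagger_category C \<and>
    unt C \<in> Obj C \<and>
    (\<forall>a \<in> Obj C. \<forall>b \<in> Obj C. tno C a b \<in> Obj C) \<and>
    (\<forall>a b c d f g. f \<in> Hom C a b \<longrightarrow> g \<in> Hom C c d \<longrightarrow>
        tnm C f g \<in> Hom C (tno C a c) (tno C b d)) \<and>
    (\<forall>a \<in> Obj C. \<forall>b \<in> Obj C. tnm C (idm C a) (idm C b) = idm C (tno C a b)) \<and>
    (\<forall>a b c a' b' c' f f' g g'. f \<in> Hom C a b \<longrightarrow> f' \<in> Hom C b c \<longrightarrow>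
        g \<in> Hom C a' b' \<longrightarrow> g' \<in> Hom C b' c' \<longrightarrow>
        tnm C (cmp C f' f) (cmp C g' g) = cmp C (tnm C f' g') (tnm C f g)) \<and>
    (\<forall>a b c d f g. f \<in> Hom C a b \<longrightarrow> g \<in> Hom C c d \<longrightarrow>
        dag C (tnm C f g) = tnm C (dag C f) (dag C g)) \<and>
    (\<forall>a \<in> Obj C. \<forall>b \<in> Obj C. \<forall>c \<in> Obj C.
        unitary C (asc C a b c) (tno C (tno C a b) c) (tno C a (tno C b c))) \<and>
    (\<forall>a \<in> Obj C. unitary C (lun C a) (tno C (unt C) a) a) \<and>
    (\<forall>a \<in> Obj C. unitary C (run C a) (tno C a (unt C)) a) \<and>
    (\<forall>a \<in> Obj C. \<forall>b \<in> Obj C. unitary C (brd C a b) (tno C a b) (tno C b a)) \<and>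
    (\<forall>a b a' b' a'' b'' f g h. f \<in> Hom C a b \<longrightarrow> g \<in> Hom C a' b' \<longrightarrow> h \<in> Hom C a'' b'' \<longrightarrow>
        cmp C (asc C b b' b'') (tnm C (tnm C f g) h) =
        cmp C (tnm C f (tnm C g h)) (asc C a a' a'')) \<and>
    (\<forall>a b f. f \<in> Hom C a b \<longrightarrow>
        cmp C (lun C b) (tnm C (idm C (unt C)) f) = cmp C f (lun C a)) \<and>
    (\<forall>a b f. f \<in> Hom C a b \<longrightarrow>
        cmp C (run C b) (tnm C f (idm C (unt C))) = cmp C f (run C a)) \<and>
    (\<forall>a b c d f g. f \<in> Hom C a b \<longrightarrow> g \<in> Hom C c d \<longrightarrow>
        cmp C (brd C b d) (tnm C f g) = cmp C (tnm C g f) (brd C a c)) \<and>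
    (\<forall>a \<in> Obj C. \<forall>b \<in> Obj C. \<forall>c \<in> Obj C. \<forall>d \<in> Obj C.
        cmp C (asc C a b (tno C c d)) (asc C (tno C a b) c d) =
        cmp C (tnm C (idm C a) (asc C b c d))
          (cmp C (asc C a (tno C b c) d) (tnm C (asc C a b c) (idm C d)))) \<and>
    (\<forall>a \<in> Obj C. \<forall>b \<in> Obj C.
        cmp C (tnm C (idm C a) (lun C b)) (asc C a (unt C) b) = tnm C (run C a) (idm C b)) \<and>
    (\<forall>a \<in> Obj C. \<forall>b \<in> Obj C. \<forall>c \<in> Obj C.
        cmp C (asc C b c a) (cmp C (brd C a (tno C b c)) (asc C a b c)) =
        cmp C (tnm C (idm C b) (brd C a c))
          (cmp C (asc C b a c) (tnm C (brd C a b) (idm C c)))) \<and>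
    (\<forall>a \<in> Obj C. \<forall>b \<in> Obj C. cmp C (brd C b a) (brd C a b) = idm C (tno C a b))"

definition is_BZ2_action :: "('o, 'm, 'x) dcat_scheme \<Rightarrow> bool" where
  "is_BZ2_action C \<longleftrightarrow>
    (\<forall>a \<in> Obj C. par C a \<in> Hom C a a \<and> cmp C (par C a) (par C a) = idm C a
                  \<and> unitary C (par C a) a a) \<and>
    (\<forall>a b f. f \<in> Hom C a b \<longrightarrow> cmp C (par C b) f = cmp C f (par C a)) \<and>
    (\<forall>a \<in> Obj C. \<forall>b \<in> Obj C. par C (tno C a b) = tnm C (par C a) (par C b)) \<and>
    par C (unt C) = idm C (unt C)"

definition is_duality :: "('o, 'm, 'x) dcat_scheme \<Rightarrow> 'o \<Rightarrow> 'o \<Rightarrow> 'm \<Rightarrow> 'm \<Rightarrow> bool" where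
  "is_duality C x xs ev coev \<longleftrightarrow> xs \<in> Obj C \<and>
     ev \<in> Hom C (tno C xs x) (unt C) \<and> coev \<in> Hom C (unt C) (tno C x xs) \<and>
     cmp C (run C x) (cmp C (tnm C (idm C x) ev) (cmp C (asc C x xs x)
        (cmp C (tnm C coev (idm C x)) (dag C (lun C x))))) = idm C x \<and>
     cmp C (lun C xs) (cmp C (tnm C ev (idm C xs)) (cmp C (dag C (asc C xs x xs))
        (cmp C (tnm C (idm C xs) coev) (dag C (run C xs))))) = idm C xs"

definition is_fermionically_dagger_compact :: "('o, 'm, 'x) dcat_scheme \<Rightarrow> bool" where
  "is_fermionically_dagger_compact C \<longleftrightarrow>
    is_sym_monoidal_dagger_category C \<and> is_BZ2_action C \<and>
    (\<forall>x \<in> Obj C. \<exists>xs ev coev. is_duality C x xs ev coev \<and>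
        cmp C (brd C xs x) (dag C ev) = cmp C (tnm C (par C x) (idm C xs)) coev)"

definition is_sym_monoidal_dagger_functor ::
  "('o, 'm, 'x) dcat_scheme \<Rightarrow> ('p, 'n, 'y) dcat_scheme \<Rightarrow> ('o \<Rightarrow> 'p) \<Rightarrow> ('m \<Rightarrow> 'n)
   \<Rightarrow> ('o \<Rightarrow> 'o \<Rightarrow> 'n) \<Rightarrow> 'n \<Rightarrow> bool" where
  "is_sym_monoidal_dagger_functor C D Fo Fm mu eps \<longleftrightarrow>
    (\<forall>a \<in> Obj C. Fo a \<in> Obj D) \<and>
    (\<forall>a b f. f \<in> Hom C a b \<longrightarrow> Fm f \<in> Hom D (Fo a) (Fo b)) \<and>
    (\<forall>a b c f g. f \<in> Hom C a b \<longrightarrow> g \<in> Hom C b c \<longrightarrow>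
        Fm (cmp C g f) = cmp D (Fm g) (Fm f)) \<and>
    (\<forall>a \<in> Obj C. Fm (idm C a) = idm D (Fo a)) \<and>
    (\<forall>a b f. f \<in> Hom C a b \<longrightarrow> Fm (dag C f) = dag D (Fm f)) \<and>
    (\<forall>a \<in> Obj C. \<forall>b \<in> Obj C. unitary D (mu a b) (tno D (Fo a) (Fo b)) (Fo (tno C a b))) \<and>
    unitary D eps (unt D) (Fo (unt C)) \<and>
    (\<forall>a b c d f g. f \<in> Hom C a b \<longrightarrow> g \<in> Hom C c d \<longrightarrow>
        cmp D (mu b d) (tnm D (Fm f) (Fm g)) = cmp D (Fm (tnm C f g)) (mu a c)) \<and>
    (\<forall>a \<in> Obj C. \<forall>b \<in> Obj C. \<forall>c \<in> Obj C.
        cmp D (Fm (asc C a b c)) (cmp D (mu (tno C a b) c) (tnm D (mu a b) (idm D (Fo c)))) =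
        cmp D (mu a (tno C b c)) (cmp D (tnm D (idm D (Fo a)) (mu b c))
                                       (asc D (Fo a) (Fo b) (Fo c)))) \<and>
    (\<forall>a \<in> Obj C. lun D (Fo a) =
        cmp D (Fm (lun C a)) (cmp D (mu (unt C) a) (tnm D eps (idm D (Fo a))))) \<and>
    (\<forall>a \<in> Obj C. run D (Fo a) =
        cmp D (Fm (run C a)) (cmp D (mu a (unt C)) (tnm D (idm D (Fo a)) eps))) \<and>
    (\<forall>a \<in> Obj C. \<forall>b \<in> Obj C.
        cmp D (Fm (brd C a b)) (mu a b) = cmp D (mu b a) (brd D (Fo a) (Fo b)))"

end

(*
  Let (x', ev, coev) be a duality of x in D1 whose fermionic relation involves P = (-1)^F_x.
  Applying F gives a duality of F x with dual F x' whose relation involves F P, while D2 provides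
  a duality of F x with some dual y whose relation involves Q = (-1)^F_(F x).  Two duals of the
  same object are related by an isomorphism h : F x' -> y, the mate of one evaluation against the
  other coevaluation.  Comparing the two relations through h shows that the transpose R : y -> y
  of the involution T = F P o Q equals h o h^dagger, so R is an iso-positive involution and hence
  the identity.  Transposition along a duality is faithful, so T = id, i.e. F P = Q.
*)

theory Submission
  imports Defs
begin

section \<open>Symmetric monoidal dagger categories\<close>

locale sm_dagger =
  fixes C :: "('o, 'm, 'x) dcat_scheme" (structure)
  assumes sm_dagger_category: "is_sym_monoidal_dagger_category C"
begin

abbreviation cmp_infix (infixr "\<cdot>" 55) where "g \<cdot> f \<equiv> cmp C g f"
abbreviation tnm_infix (infixr "\<otimes>" 60) where "f \<otimes> g \<equiv> tnm C f g"
abbreviation tno_infix (infixr "\<odot>" 60) where "a \<odot> b \<equiv> tno C a b"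
abbreviation ide where "ide a \<equiv> idm C a"
abbreviation dag_postfix ("_\<^sup>\<dagger>" [1000] 999) where "f\<^sup>\<dagger> \<equiv> dag C f"
abbreviation U where "U \<equiv> unt C"
abbreviation hom where "hom a b \<equiv> Hom C a b"
abbreviation obj where "obj \<equiv> Obj C"

lemmas sm_axioms = sm_dagger_category[unfolded is_sym_monoidal_dagger_category_def
  is_dagger_category_def is_category_def]

lemma hom_obj' [rule_format]: "\<forall>a b f. f \<in> hom a b \<longrightarrow> a \<in> obj \<and> b \<in> obj"
  using sm_axioms by (elim conjE) assumption
lemma hom_obj: "f \<in> hom a b \<Longrightarrow> a \<in> obj" "f \<in> hom a b \<Longrightarrow> b \<in> obj"
  using hom_obj' by blast+
lemma ide_in_hom [rule_format, intro]: "\<forall>a \<in> obj. ide a \<in> hom a a"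
  using sm_axioms by (elim conjE) assumption
lemma cmp_in_hom [rule_format, intro]:
  "\<forall>a b c f g. f \<in> hom a b \<longrightarrow> g \<in> hom b c \<longrightarrow> g \<cdot> f \<in> hom a c"
  using sm_axioms by (elim conjE) assumption
lemma ide_cmp_cmp_ide [rule_format]: "\<forall>a b f. f \<in> hom a b \<longrightarrow> ide b \<cdot> f = f \<and> f \<cdot> ide a = f"
  using sm_axioms by (elim conjE) assumption
lemma ide_cmp [simp]: "f \<in> hom a b \<Longrightarrow> ide b \<cdot> f = f"
  by (simp add: ide_cmp_cmp_ide)
lemma cmp_ide [simp]: "f \<in> hom a b \<Longrightarrow> f \<cdot> ide a = f"
  by (simp add: ide_cmp_cmp_ide)
lemma cmp_assoc [rule_format]: "\<forall>a b c d f g h. f \<in> hom a b \<longrightarrow> g \<in> hom b c \<longrightarrow> h \<in> hom c d \<longrightarrow>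
    h \<cdot> (g \<cdot> f) = (h \<cdot> g) \<cdot> f"
  using sm_axioms by (elim conjE) assumption

lemma dag_in_hom_dag_dag [rule_format]: "\<forall>a b f. f \<in> hom a b \<longrightarrow> f\<^sup>\<dagger> \<in> hom b a \<and> (f\<^sup>\<dagger>)\<^sup>\<dagger> = f"
  using sm_axioms by (elim conjE) assumption
lemma dag_in_hom [intro]: "f \<in> hom a b \<Longrightarrow> f\<^sup>\<dagger> \<in> hom b a"
  by (simp add: dag_in_hom_dag_dag)
lemma dag_dag [simp]: "f \<in> hom a b \<Longrightarrow> (f\<^sup>\<dagger>)\<^sup>\<dagger> = f"
  by (simp add: dag_in_hom_dag_dag)
lemma dag_cmp [rule_format]: "\<forall>a b c f g. f \<in> hom a b \<longrightarrow> g \<in> hom b c \<longrightarrow> (g \<cdot> f)\<^sup>\<dagger> = f\<^sup>\<dagger> \<cdot> g\<^sup>\<dagger>"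
  using sm_axioms by (elim conjE) assumption
lemma dag_ide [rule_format, simp]: "\<forall>a \<in> obj. (ide a)\<^sup>\<dagger> = ide a"
  using sm_axioms by (elim conjE) assumption

lemma unt_obj [intro, simp]: "U \<in> obj"
  using sm_axioms by (elim conjE) assumption
lemma tno_obj [rule_format, intro, simp]: "\<forall>a \<in> obj. \<forall>b \<in> obj. a \<odot> b \<in> obj"
  using sm_axioms by (elim conjE) assumption
lemma tnm_in_hom [rule_format, intro]:
  "\<forall>a b c d f g. f \<in> hom a b \<longrightarrow> g \<in> hom c d \<longrightarrow> f \<otimes> g \<in> hom (a \<odot> c) (b \<odot> d)"
  using sm_axioms by (elim conjE) assumption
lemma tnm_ide [rule_format, simp]: "\<forall>a \<in> obj. \<forall>b \<in> obj. ide a \<otimes> ide b = ide (a \<odot> b)"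
  using sm_axioms by (elim conjE) assumption
lemma tnm_cmp [rule_format]: "\<forall>a b c a' b' c' f f' g g'. f \<in> hom a b \<longrightarrow> f' \<in> hom b c \<longrightarrow>
    g \<in> hom a' b' \<longrightarrow> g' \<in> hom b' c' \<longrightarrow> (f' \<cdot> f) \<otimes> (g' \<cdot> g) = (f' \<otimes> g') \<cdot> (f \<otimes> g)"
  using sm_axioms by (elim conjE) assumption
lemma dag_tnm [rule_format]: "\<forall>a b c d f g. f \<in> hom a b \<longrightarrow> g \<in> hom c d \<longrightarrow> (f \<otimes> g)\<^sup>\<dagger> = f\<^sup>\<dagger> \<otimes> g\<^sup>\<dagger>"
  using sm_axioms by (elim conjE) assumption

lemma asc_unitary [rule_format]: "\<forall>a \<in> obj. \<forall>b \<in> obj. \<forall>c \<in> obj.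
    unitary C (asc C a b c) ((a \<odot> b) \<odot> c) (a \<odot> (b \<odot> c))"
  using sm_axioms by (elim conjE) assumption
lemma lun_unitary [rule_format]: "\<forall>a \<in> obj. unitary C (lun C a) (U \<odot> a) a"
  using sm_axioms by (elim conjE) assumption
lemma run_unitary [rule_format]: "\<forall>a \<in> obj. unitary C (run C a) (a \<odot> U) a"
  using sm_axioms by (elim conjE) assumption
lemma brd_unitary [rule_format]: "\<forall>a \<in> obj. \<forall>b \<in> obj. unitary C (brd C a b) (a \<odot> b) (b \<odot> a)"
  using sm_axioms by (elim conjE) assumption

lemma asc_in_hom [intro]: "a \<in> obj \<Longrightarrow> b \<in> obj \<Longrightarrow> c \<in> obj \<Longrightarrow>
    asc C a b c \<in> hom ((a \<odot> b) \<odot> c) (a \<odot> (b \<odot> c))"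
  using asc_unitary[of a b c] by (simp add: unitary_def)
lemma lun_in_hom [intro]: "a \<in> obj \<Longrightarrow> lun C a \<in> hom (U \<odot> a) a"
  using lun_unitary[of a] by (simp add: unitary_def)
lemma run_in_hom [intro]: "a \<in> obj \<Longrightarrow> run C a \<in> hom (a \<odot> U) a"
  using run_unitary[of a] by (simp add: unitary_def)
lemma brd_in_hom [intro]: "a \<in> obj \<Longrightarrow> b \<in> obj \<Longrightarrow> brd C a b \<in> hom (a \<odot> b) (b \<odot> a)"
  using brd_unitary[of a b] by (simp add: unitary_def)

lemma asc_natural [rule_format]: "\<forall>a b a' b' a'' b'' f g h.
    f \<in> hom a b \<longrightarrow> g \<in> hom a' b' \<longrightarrow> h \<in> hom a'' b'' \<longrightarrow>
    asc C b b' b'' \<cdot> ((f \<otimes> g) \<otimes> h) = (f \<otimes> (g \<otimes> h)) \<cdot> asc C a a' a''"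
  using sm_axioms by (elim conjE) assumption
lemma lun_natural [rule_format]: "\<forall>a b f. f \<in> hom a b \<longrightarrow> lun C b \<cdot> (ide U \<otimes> f) = f \<cdot> lun C a"
  using sm_axioms by (elim conjE) assumption
lemma run_natural [rule_format]: "\<forall>a b f. f \<in> hom a b \<longrightarrow> run C b \<cdot> (f \<otimes> ide U) = f \<cdot> run C a"
  using sm_axioms by (elim conjE) assumption
lemma brd_natural [rule_format]: "\<forall>a b c d f g. f \<in> hom a b \<longrightarrow> g \<in> hom c d \<longrightarrow>
    brd C b d \<cdot> (f \<otimes> g) = (g \<otimes> f) \<cdot> brd C a c"
  using sm_axioms by (elim conjE) assumption
lemma pentagon_asc [rule_format]: "\<forall>a \<in> obj. \<forall>b \<in> obj. \<forall>c \<in> obj. \<forall>d \<in> obj.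
    asc C a b (c \<odot> d) \<cdot> asc C (a \<odot> b) c d =
    (ide a \<otimes> asc C b c d) \<cdot> (asc C a (b \<odot> c) d \<cdot> (asc C a b c \<otimes> ide d))"
  using sm_axioms by (elim conjE) assumption
lemma triangle_asc [rule_format]: "\<forall>a \<in> obj. \<forall>b \<in> obj.
    (ide a \<otimes> lun C b) \<cdot> asc C a U b = run C a \<otimes> ide b"
  using sm_axioms by (elim conjE) assumption

end

section \<open>Typed arrows\<close>

text \<open>Morphisms are packaged with their domain and codomain into arrows; ill-typed composites and
tensor products of arrows are the junk value \<^term>\<open>None\<close>. This makes composition associative
without side conditions, so that the coherence calculations below can be carried out by rewriting.\<close>

type_synonym ('o, 'm) arrow = "('o \<times> 'm \<times> 'o) option"

definition src :: "('o, 'm) arrow \<Rightarrow> 'o" where "src x = fst (the x)"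
definition mor :: "('o, 'm) arrow \<Rightarrow> 'm" where "mor x = fst (snd (the x))"
definition trg :: "('o, 'm) arrow \<Rightarrow> 'o" where "trg x = snd (snd (the x))"

context sm_dagger
begin

definition arr :: "('o, 'm) arrow \<Rightarrow> bool" where
  "arr x \<longleftrightarrow> x \<noteq> None \<and> mor x \<in> hom (src x) (trg x)"
definition Arr :: "'o \<Rightarrow> 'm \<Rightarrow> 'o \<Rightarrow> ('o, 'm) arrow" where
  "Arr a f b = (if f \<in> hom a b then Some (a, f, b) else None)"
definition acomp :: "('o, 'm) arrow \<Rightarrow> ('o, 'm) arrow \<Rightarrow> ('o, 'm) arrow" (infixr "\<circ>\<circ>" 55) where
  "x \<circ>\<circ> y = (if arr x \<and> arr y \<and> src x = trg y then Some (src y, mor x \<cdot> mor y, trg x) else None)"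
definition atens :: "('o, 'm) arrow \<Rightarrow> ('o, 'm) arrow \<Rightarrow> ('o, 'm) arrow" (infixr "\<box>" 60) where
  "x \<box> y = (if arr x \<and> arr y then Some (src x \<odot> src y, mor x \<otimes> mor y, trg x \<odot> trg y) else None)"
definition adag :: "('o, 'm) arrow \<Rightarrow> ('o, 'm) arrow" ("_\<^sup>\<star>" [1000] 999) where
  "x\<^sup>\<star> = (if arr x then Some (trg x, (mor x)\<^sup>\<dagger>, src x) else None)"

definition Ide where "Ide a = Arr a (ide a) a"
definition As where "As a b c = Arr ((a \<odot> b) \<odot> c) (asc C a b c) (a \<odot> (b \<odot> c))"
definition Lu where "Lu a = Arr (U \<odot> a) (lun C a) a"
definition Ru where "Ru a = Arr (a \<odot> U) (run C a) a"
definition Br where "Br a b = Arr (a \<odot> b) (brd C a b) (b \<odot> a)"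

lemma arrD: "arr x \<Longrightarrow> mor x \<in> hom (src x) (trg x)"
  unfolding arr_def by auto
lemma arr_obj: "arr x \<Longrightarrow> src x \<in> obj" "arr x \<Longrightarrow> trg x \<in> obj"
  unfolding arr_def by (auto dest: hom_obj)
lemma arr_eqI: "arr x \<Longrightarrow> arr y \<Longrightarrow> src x = src y \<Longrightarrow> trg x = trg y \<Longrightarrow> mor x = mor y \<Longrightarrow> x = y"
  unfolding arr_def src_def trg_def mor_def by (cases x; cases y) auto

lemma arr_acomp [simp]: "arr (x \<circ>\<circ> y) \<longleftrightarrow> arr x \<and> arr y \<and> src x = trg y"
  unfolding acomp_def arr_def src_def trg_def mor_def by (auto intro: cmp_in_hom)
lemma src_acomp [simp]: "arr x \<Longrightarrow> arr y \<Longrightarrow> src x = trg y \<Longrightarrow> src (x \<circ>\<circ> y) = src y"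
  unfolding acomp_def src_def by auto
lemma trg_acomp [simp]: "arr x \<Longrightarrow> arr y \<Longrightarrow> src x = trg y \<Longrightarrow> trg (x \<circ>\<circ> y) = trg x"
  unfolding acomp_def trg_def by auto
lemma mor_acomp: "arr x \<Longrightarrow> arr y \<Longrightarrow> src x = trg y \<Longrightarrow> mor (x \<circ>\<circ> y) = mor x \<cdot> mor y"
  unfolding acomp_def mor_def by auto
lemma acomp_None: "\<not> arr (x \<circ>\<circ> y) \<Longrightarrow> x \<circ>\<circ> y = None"
  unfolding arr_acomp by (simp add: acomp_def)

lemma arr_atens [simp]: "arr (x \<box> y) \<longleftrightarrow> arr x \<and> arr y"
  unfolding atens_def arr_def src_def trg_def mor_def by (auto intro: tnm_in_hom)
lemma src_atens [simp]: "arr x \<Longrightarrow> arr y \<Longrightarrow> src (x \<box> y) = src x \<odot> src y"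
  unfolding atens_def src_def by auto
lemma trg_atens [simp]: "arr x \<Longrightarrow> arr y \<Longrightarrow> trg (x \<box> y) = trg x \<odot> trg y"
  unfolding atens_def trg_def by auto
lemma mor_atens: "arr x \<Longrightarrow> arr y \<Longrightarrow> mor (x \<box> y) = mor x \<otimes> mor y"
  unfolding atens_def mor_def by auto
lemma atens_None: "\<not> arr (x \<box> y) \<Longrightarrow> x \<box> y = None"
  unfolding arr_atens by (auto simp: atens_def)

lemma arr_adag [simp]: "arr (x\<^sup>\<star>) \<longleftrightarrow> arr x"
  unfolding adag_def arr_def src_def trg_def mor_def by (auto intro: dag_in_hom)
lemma src_adag [simp]: "arr x \<Longrightarrow> src (x\<^sup>\<star>) = trg x"
  unfolding adag_def src_def trg_def by auto
lemma trg_adag [simp]: "arr x \<Longrightarrow> trg (x\<^sup>\<star>) = src x"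
  unfolding adag_def src_def trg_def by auto
lemma mor_adag: "arr x \<Longrightarrow> mor (x\<^sup>\<star>) = (mor x)\<^sup>\<dagger>"
  unfolding adag_def mor_def by auto
lemma adag_None: "\<not> arr (x\<^sup>\<star>) \<Longrightarrow> x\<^sup>\<star> = None"
  unfolding arr_adag by (simp add: adag_def)

lemma arr_Arr [simp]: "arr (Arr a f b) \<longleftrightarrow> f \<in> hom a b"
  unfolding Arr_def arr_def src_def trg_def mor_def by auto
lemma src_Arr [simp]: "f \<in> hom a b \<Longrightarrow> src (Arr a f b) = a"
  unfolding Arr_def src_def by auto
lemma trg_Arr [simp]: "f \<in> hom a b \<Longrightarrow> trg (Arr a f b) = b"
  unfolding Arr_def trg_def by auto
lemma mor_Arr [simp]: "f \<in> hom a b \<Longrightarrow> mor (Arr a f b) = f"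
  unfolding Arr_def mor_def by auto

lemma acomp_Arr: "f \<in> hom a b \<Longrightarrow> g \<in> hom b c \<Longrightarrow> Arr b g c \<circ>\<circ> Arr a f b = Arr a (g \<cdot> f) c"
  unfolding acomp_def by (simp add: Arr_def arr_def src_def trg_def mor_def cmp_in_hom)
lemma atens_Arr: "f \<in> hom a b \<Longrightarrow> g \<in> hom c d \<Longrightarrow> Arr a f b \<box> Arr c g d = Arr (a \<odot> c) (f \<otimes> g) (b \<odot> d)"
  unfolding atens_def by (simp add: Arr_def arr_def src_def trg_def mor_def tnm_in_hom)
lemma adag_Arr: "f \<in> hom a b \<Longrightarrow> (Arr a f b)\<^sup>\<star> = Arr b (f\<^sup>\<dagger>) a"
  unfolding adag_def by (simp add: Arr_def arr_def src_def trg_def mor_def dag_in_hom)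

lemma arr_Ide [simp]: "a \<in> obj \<Longrightarrow> arr (Ide a)"
  and src_Ide [simp]: "a \<in> obj \<Longrightarrow> src (Ide a) = a"
  and trg_Ide [simp]: "a \<in> obj \<Longrightarrow> trg (Ide a) = a"
  and mor_Ide [simp]: "a \<in> obj \<Longrightarrow> mor (Ide a) = ide a"
  unfolding Ide_def by (auto simp: ide_in_hom)
lemma arr_As [simp]: "a \<in> obj \<Longrightarrow> b \<in> obj \<Longrightarrow> c \<in> obj \<Longrightarrow> arr (As a b c)"
  and src_As [simp]: "a \<in> obj \<Longrightarrow> b \<in> obj \<Longrightarrow> c \<in> obj \<Longrightarrow> src (As a b c) = (a \<odot> b) \<odot> c"
  and trg_As [simp]: "a \<in> obj \<Longrightarrow> b \<in> obj \<Longrightarrow> c \<in> obj \<Longrightarrow> trg (As a b c) = a \<odot> (b \<odot> c)"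
  and mor_As [simp]: "a \<in> obj \<Longrightarrow> b \<in> obj \<Longrightarrow> c \<in> obj \<Longrightarrow> mor (As a b c) = asc C a b c"
  unfolding As_def by (auto simp: asc_in_hom)
lemma arr_Lu [simp]: "a \<in> obj \<Longrightarrow> arr (Lu a)"
  and src_Lu [simp]: "a \<in> obj \<Longrightarrow> src (Lu a) = U \<odot> a"
  and trg_Lu [simp]: "a \<in> obj \<Longrightarrow> trg (Lu a) = a"
  and mor_Lu [simp]: "a \<in> obj \<Longrightarrow> mor (Lu a) = lun C a"
  unfolding Lu_def by (auto simp: lun_in_hom)
lemma arr_Ru [simp]: "a \<in> obj \<Longrightarrow> arr (Ru a)"
  and src_Ru [simp]: "a \<in> obj \<Longrightarrow> src (Ru a) = a \<odot> U"
  and trg_Ru [simp]: "a \<in> obj \<Longrightarrow> trg (Ru a) = a"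
  and mor_Ru [simp]: "a \<in> obj \<Longrightarrow> mor (Ru a) = run C a"
  unfolding Ru_def by (auto simp: run_in_hom)
lemma arr_Br [simp]: "a \<in> obj \<Longrightarrow> b \<in> obj \<Longrightarrow> arr (Br a b)"
  and src_Br [simp]: "a \<in> obj \<Longrightarrow> b \<in> obj \<Longrightarrow> src (Br a b) = a \<odot> b"
  and trg_Br [simp]: "a \<in> obj \<Longrightarrow> b \<in> obj \<Longrightarrow> trg (Br a b) = b \<odot> a"
  and mor_Br [simp]: "a \<in> obj \<Longrightarrow> b \<in> obj \<Longrightarrow> mor (Br a b) = brd C a b"
  unfolding Br_def by (auto simp: brd_in_hom)

lemmas arr_typing = arr_acomp arr_atens arr_adag arr_Ide arr_As arr_Lu arr_Ru arr_Br
  src_acomp trg_acomp src_atens trg_atens src_adag trg_adag src_Ide trg_Ide src_As trg_As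
  src_Lu trg_Lu src_Ru trg_Ru src_Br trg_Br unt_obj tno_obj simp_thms

lemma acomp_assoc: "(x \<circ>\<circ> y) \<circ>\<circ> z = x \<circ>\<circ> (y \<circ>\<circ> z)"
proof (cases "arr x \<and> arr y \<and> arr z \<and> src x = trg y \<and> src y = trg z")
  case True
  then show ?thesis
    using cmp_assoc[of "mor z" "src z" "trg z" "mor y" "trg y" "mor x" "trg x"]
    by (intro arr_eqI) (simp_all add: mor_acomp, auto simp: arr_def)
next
  case False
  then have "\<not> arr ((x \<circ>\<circ> y) \<circ>\<circ> z)" "\<not> arr (x \<circ>\<circ> (y \<circ>\<circ> z))" by auto
  then show ?thesis by (metis acomp_None)
qed

lemma acomp_rewrite: "p \<circ>\<circ> q = r \<Longrightarrow> p \<circ>\<circ> (q \<circ>\<circ> x) = r \<circ>\<circ> x"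
  by (metis acomp_assoc)
lemma acomp_rewrite3: "p \<circ>\<circ> q \<circ>\<circ> r = s \<Longrightarrow> p \<circ>\<circ> q \<circ>\<circ> r \<circ>\<circ> x = s \<circ>\<circ> x"
  by (metis acomp_assoc)
lemma acomp_rewrite4: "p \<circ>\<circ> q \<circ>\<circ> r \<circ>\<circ> t = s \<Longrightarrow> p \<circ>\<circ> q \<circ>\<circ> r \<circ>\<circ> t \<circ>\<circ> x = s \<circ>\<circ> x"
  by (metis acomp_assoc)

lemma Ide_acomp: "arr x \<Longrightarrow> trg x = b \<Longrightarrow> Ide b \<circ>\<circ> x = x"
  by (intro arr_eqI) (auto simp: mor_acomp arr_obj ide_cmp[OF arrD])
lemma acomp_Ide: "arr x \<Longrightarrow> src x = a \<Longrightarrow> x \<circ>\<circ> Ide a = x"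
  by (intro arr_eqI) (auto simp: mor_acomp arr_obj cmp_ide[OF arrD])

lemma interchange: "arr x \<Longrightarrow> arr y \<Longrightarrow> arr z \<Longrightarrow> arr w \<Longrightarrow> src x = trg y \<Longrightarrow> src z = trg w \<Longrightarrow>
    (x \<circ>\<circ> y) \<box> (z \<circ>\<circ> w) = (x \<box> z) \<circ>\<circ> (y \<box> w)"
  using tnm_cmp[of "mor y" "src y" "trg y" "mor x" "trg x" "mor w" "src w" "trg w" "mor z" "trg z"]
  by (intro arr_eqI) (simp_all add: mor_acomp mor_atens, auto simp: arr_def)
lemma interchange_Ide_left: "arr x \<Longrightarrow> arr y \<Longrightarrow> src x = trg y \<Longrightarrow> a \<in> obj \<Longrightarrow>
    Ide a \<box> (x \<circ>\<circ> y) = (Ide a \<box> x) \<circ>\<circ> (Ide a \<box> y)"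
  using interchange[of "Ide a" "Ide a" x y] Ide_acomp[of "Ide a" a] by simp
lemma interchange_Ide_right: "arr x \<Longrightarrow> arr y \<Longrightarrow> src x = trg y \<Longrightarrow> a \<in> obj \<Longrightarrow>
    (x \<circ>\<circ> y) \<box> Ide a = (x \<box> Ide a) \<circ>\<circ> (y \<box> Ide a)"
  using interchange[of x y "Ide a" "Ide a"] Ide_acomp[of "Ide a" a] by simp
lemma atens_Ide: "a \<in> obj \<Longrightarrow> b \<in> obj \<Longrightarrow> Ide a \<box> Ide b = Ide (a \<odot> b)"
  unfolding Ide_def by (simp add: atens_Arr ide_in_hom)
lemma atens_factor_left: "arr x \<Longrightarrow> arr y \<Longrightarrow> src x = p \<Longrightarrow> trg y = s \<Longrightarrow>
    (x \<box> Ide s) \<circ>\<circ> (Ide p \<box> y) = x \<box> y"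
  using arr_obj[of x] arr_obj[of y] by (simp add: interchange[symmetric] Ide_acomp acomp_Ide)
lemma atens_factor_right: "arr x \<Longrightarrow> arr y \<Longrightarrow> trg x = q \<Longrightarrow> src y = r \<Longrightarrow>
    (Ide q \<box> y) \<circ>\<circ> (x \<box> Ide r) = x \<box> y"
  using arr_obj[of x] arr_obj[of y] by (simp add: interchange[symmetric] Ide_acomp acomp_Ide)

lemma adag_acomp: "(x \<circ>\<circ> y)\<^sup>\<star> = y\<^sup>\<star> \<circ>\<circ> x\<^sup>\<star>"
proof (cases "arr x \<and> arr y \<and> src x = trg y")
  case True
  then show ?thesis
    using dag_cmp[of "mor y" "src y" "trg y" "mor x" "trg x"]
    by (intro arr_eqI) (simp_all add: mor_acomp mor_adag, auto simp: arr_def)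
next
  case False
  then have "\<not> arr ((x \<circ>\<circ> y)\<^sup>\<star>)" "\<not> arr (y\<^sup>\<star> \<circ>\<circ> x\<^sup>\<star>)" by auto
  then show ?thesis by (metis acomp_None adag_None)
qed
lemma adag_atens: "(x \<box> y)\<^sup>\<star> = x\<^sup>\<star> \<box> y\<^sup>\<star>"
proof (cases "arr x \<and> arr y")
  case True
  then show ?thesis
    using dag_tnm[of "mor x" "src x" "trg x" "mor y" "src y" "trg y"]
    by (intro arr_eqI) (simp_all add: mor_atens mor_adag, auto simp: arr_def)
next
  case False
  then have "\<not> arr ((x \<box> y)\<^sup>\<star>)" "\<not> arr (x\<^sup>\<star> \<box> y\<^sup>\<star>)" by auto
  then show ?thesis by (metis atens_None adag_None)
qed
lemma adag_adag: "arr x \<Longrightarrow> (x\<^sup>\<star>)\<^sup>\<star> = x"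
  by (intro arr_eqI) (auto simp: mor_adag dag_dag[OF arrD])
lemma adag_Ide: "a \<in> obj \<Longrightarrow> (Ide a)\<^sup>\<star> = Ide a"
  unfolding Ide_def by (simp add: adag_Arr ide_in_hom)

lemma As_natural: "arr x \<Longrightarrow> arr y \<Longrightarrow> arr z \<Longrightarrow> src x = a \<Longrightarrow> src y = a' \<Longrightarrow> src z = a'' \<Longrightarrow>
    trg x = b \<Longrightarrow> trg y = b' \<Longrightarrow> trg z = b'' \<Longrightarrow>
    As b b' b'' \<circ>\<circ> ((x \<box> y) \<box> z) = (x \<box> (y \<box> z)) \<circ>\<circ> As a a' a''"
  by (intro arr_eqI) (auto simp: mor_acomp mor_atens arr_obj arrD asc_natural)
lemma Lu_natural: "arr x \<Longrightarrow> src x = a \<Longrightarrow> trg x = b \<Longrightarrow> Lu b \<circ>\<circ> (Ide U \<box> x) = x \<circ>\<circ> Lu a"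
  by (intro arr_eqI) (auto simp: mor_acomp mor_atens arr_obj arrD lun_natural)
lemma Ru_natural: "arr x \<Longrightarrow> src x = a \<Longrightarrow> trg x = b \<Longrightarrow> Ru b \<circ>\<circ> (x \<box> Ide U) = x \<circ>\<circ> Ru a"
  by (intro arr_eqI) (auto simp: mor_acomp mor_atens arr_obj arrD run_natural)
lemma Br_natural: "arr x \<Longrightarrow> arr y \<Longrightarrow> src x = a \<Longrightarrow> trg x = b \<Longrightarrow> src y = c \<Longrightarrow> trg y = d \<Longrightarrow>
    Br b d \<circ>\<circ> (x \<box> y) = (y \<box> x) \<circ>\<circ> Br a c"
  by (intro arr_eqI) (auto simp: mor_acomp mor_atens arr_obj arrD brd_natural)
lemma pentagon: "a \<in> obj \<Longrightarrow> b \<in> obj \<Longrightarrow> c \<in> obj \<Longrightarrow> d \<in> obj \<Longrightarrow>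
    As a b (c \<odot> d) \<circ>\<circ> As (a \<odot> b) c d = (Ide a \<box> As b c d) \<circ>\<circ> As a (b \<odot> c) d \<circ>\<circ> (As a b c \<box> Ide d)"
  by (intro arr_eqI) (simp_all add: mor_acomp mor_atens pentagon_asc)
lemma triangle: "a \<in> obj \<Longrightarrow> b \<in> obj \<Longrightarrow> (Ide a \<box> Lu b) \<circ>\<circ> As a U b = Ru a \<box> Ide b"
  by (intro arr_eqI) (simp_all add: mor_acomp mor_atens triangle_asc)

definition unitary_arr where
  "unitary_arr j \<longleftrightarrow> arr j \<and> j\<^sup>\<star> \<circ>\<circ> j = Ide (src j) \<and> j \<circ>\<circ> j\<^sup>\<star> = Ide (trg j)"

lemma unitary_arrD: "unitary_arr j \<Longrightarrow> arr j"
  unfolding unitary_arr_def by auto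
lemma unitary_arr_inv: "unitary_arr j \<Longrightarrow> j\<^sup>\<star> \<circ>\<circ> j = Ide (src j)"
    "unitary_arr j \<Longrightarrow> j \<circ>\<circ> j\<^sup>\<star> = Ide (trg j)"
  unfolding unitary_arr_def by auto
lemma unitary_arr_Arr: "unitary C f a b \<Longrightarrow> unitary_arr (Arr a f b)"
  unfolding unitary_def unitary_arr_def Ide_def by (auto simp: adag_Arr acomp_Arr dag_in_hom)
lemma unitary_arr_acomp: "unitary_arr x \<Longrightarrow> unitary_arr y \<Longrightarrow> src x = trg y \<Longrightarrow> unitary_arr (x \<circ>\<circ> y)"
  unfolding unitary_arr_def
  by (auto simp: adag_acomp acomp_assoc acomp_rewrite[of "x\<^sup>\<star>" x] acomp_rewrite[of y "y\<^sup>\<star>"] Ide_acomp)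
lemma unitary_arr_atens: "unitary_arr x \<Longrightarrow> unitary_arr y \<Longrightarrow> unitary_arr (x \<box> y)"
  unfolding unitary_arr_def by (simp add: adag_atens interchange[symmetric] atens_Ide arr_obj)
lemma unitary_arr_adag: "unitary_arr x \<Longrightarrow> unitary_arr (x\<^sup>\<star>)"
  unfolding unitary_arr_def by (simp add: adag_adag)
lemma unitary_arr_Ide: "a \<in> obj \<Longrightarrow> unitary_arr (Ide a)"
  unfolding unitary_arr_def by (simp add: adag_Ide Ide_acomp)
lemma unitary_arr_As: "a \<in> obj \<Longrightarrow> b \<in> obj \<Longrightarrow> c \<in> obj \<Longrightarrow> unitary_arr (As a b c)"
  unfolding As_def by (simp add: unitary_arr_Arr asc_unitary)
lemma unitary_arr_Lu: "a \<in> obj \<Longrightarrow> unitary_arr (Lu a)"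
  unfolding Lu_def by (simp add: unitary_arr_Arr lun_unitary)
lemma unitary_arr_Ru: "a \<in> obj \<Longrightarrow> unitary_arr (Ru a)"
  unfolding Ru_def by (simp add: unitary_arr_Arr run_unitary)

lemmas unitary_arr_intros = unitary_arr_acomp unitary_arr_atens unitary_arr_adag unitary_arr_Ide
  unitary_arr_As unitary_arr_Lu unitary_arr_Ru

lemma unitary_cancel: "unitary_arr u \<Longrightarrow> arr x \<Longrightarrow> trg x = trg u \<Longrightarrow> u \<circ>\<circ> u\<^sup>\<star> \<circ>\<circ> x = x"
  unfolding unitary_arr_def by (simp add: acomp_assoc[symmetric] Ide_acomp)
lemma unitary_cancel_left: "unitary_arr u \<Longrightarrow> c \<in> obj \<Longrightarrow> arr x \<Longrightarrow> trg x = c \<odot> trg u \<Longrightarrow>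
    (Ide c \<box> u) \<circ>\<circ> (Ide c \<box> u\<^sup>\<star>) \<circ>\<circ> x = x"
  using unitary_cancel[of "Ide c \<box> u" x] unitary_arrD[of u] arr_obj[of u]
  by (auto simp: unitary_arr_intros adag_atens adag_Ide)
lemma unitary_cancel_right: "unitary_arr u \<Longrightarrow> c \<in> obj \<Longrightarrow> arr x \<Longrightarrow> trg x = trg u \<odot> c \<Longrightarrow>
    (u \<box> Ide c) \<circ>\<circ> (u\<^sup>\<star> \<box> Ide c) \<circ>\<circ> x = x"
  using unitary_cancel[of "u \<box> Ide c" x] unitary_arrD[of u] arr_obj[of u]
  by (auto simp: unitary_arr_intros adag_atens adag_Ide)

lemma unitary_arr_Ide_atens_inv: "unitary_arr u \<Longrightarrow> c \<in> obj \<Longrightarrow>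
    (Ide c \<box> u) \<circ>\<circ> (Ide c \<box> u\<^sup>\<star>) = Ide (c \<odot> trg u)"
  using unitary_arr_inv(2)[OF unitary_arr_atens[OF unitary_arr_Ide]] unitary_arrD
  by (simp add: adag_atens adag_Ide)

lemma cancel_unitary_right: "unitary_arr j \<Longrightarrow> arr f \<Longrightarrow> arr g \<Longrightarrow> src f = trg j \<Longrightarrow> src g = trg j \<Longrightarrow>
    f \<circ>\<circ> j = g \<circ>\<circ> j \<Longrightarrow> f = g"
  unfolding unitary_arr_def by (metis acomp_Ide acomp_assoc)
lemma cancel_unitary_left: "unitary_arr j \<Longrightarrow> arr f \<Longrightarrow> arr g \<Longrightarrow> trg f = src j \<Longrightarrow> trg g = src j \<Longrightarrow>
    j \<circ>\<circ> f = j \<circ>\<circ> g \<Longrightarrow> f = g"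
  unfolding unitary_arr_def by (metis Ide_acomp acomp_assoc)

lemma unitary_swap:
  assumes "unitary_arr u" "unitary_arr v" "arr p" "arr q"
    and "src u = trg p" "src p = src v" "src q = trg v" "trg q = trg u"
    and "u \<circ>\<circ> p = q \<circ>\<circ> v"
  shows "u\<^sup>\<star> \<circ>\<circ> q = p \<circ>\<circ> v\<^sup>\<star>"
proof -
  have "u\<^sup>\<star> \<circ>\<circ> q = u\<^sup>\<star> \<circ>\<circ> q \<circ>\<circ> (v \<circ>\<circ> v\<^sup>\<star>)"
    using assms by (simp add: unitary_arr_def acomp_Ide del: acomp_assoc)
  also have "\<dots> = u\<^sup>\<star> \<circ>\<circ> (u \<circ>\<circ> p) \<circ>\<circ> v\<^sup>\<star>"
    using assms(9) by (simp add: acomp_assoc)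
  also have "\<dots> = (u\<^sup>\<star> \<circ>\<circ> u) \<circ>\<circ> p \<circ>\<circ> v\<^sup>\<star>"
    by (simp add: acomp_assoc)
  also have "\<dots> = p \<circ>\<circ> v\<^sup>\<star>"
    using assms by (simp add: unitary_arr_def Ide_acomp)
  finally show ?thesis .
qed

lemma As_inv_natural: "arr x \<Longrightarrow> arr y \<Longrightarrow> arr z \<Longrightarrow> src x = a \<Longrightarrow> src y = a' \<Longrightarrow> src z = a'' \<Longrightarrow>
    trg x = b \<Longrightarrow> trg y = b' \<Longrightarrow> trg z = b'' \<Longrightarrow>
    (As b b' b'')\<^sup>\<star> \<circ>\<circ> (x \<box> (y \<box> z)) = ((x \<box> y) \<box> z) \<circ>\<circ> (As a a' a'')\<^sup>\<star>"
  by (rule unitary_swap[OF _ _ _ _ _ _ _ _ As_natural[of x y z a a' a'' b b' b'']])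
    (auto simp: arr_obj unitary_arr_intros)
lemma Lu_inv_natural: "arr x \<Longrightarrow> src x = a \<Longrightarrow> trg x = b \<Longrightarrow> (Lu b)\<^sup>\<star> \<circ>\<circ> x = (Ide U \<box> x) \<circ>\<circ> (Lu a)\<^sup>\<star>"
  by (rule unitary_swap[OF _ _ _ _ _ _ _ _ Lu_natural[of x a b]])
    (auto simp: arr_obj unitary_arr_intros)
lemma Ru_inv_natural: "arr x \<Longrightarrow> src x = a \<Longrightarrow> trg x = b \<Longrightarrow> (Ru b)\<^sup>\<star> \<circ>\<circ> x = (x \<box> Ide U) \<circ>\<circ> (Ru a)\<^sup>\<star>"
  by (rule unitary_swap[OF _ _ _ _ _ _ _ _ Ru_natural[of x a b]])
    (auto simp: arr_obj unitary_arr_intros)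

section \<open>Coherence\<close>

lemma Lu_conj: "arr f \<Longrightarrow> f \<circ>\<circ> Lu (src f) = Lu (trg f) \<circ>\<circ> (Ide U \<box> f)"
  using Lu_natural[of f "src f" "trg f"] by simp
lemma Ru_conj: "arr f \<Longrightarrow> f \<circ>\<circ> Ru (src f) = Ru (trg f) \<circ>\<circ> (f \<box> Ide U)"
  using Ru_natural[of f "src f" "trg f"] by simp

lemma cancel_Ide_U_atens:
  assumes "arr f" "arr g" "src f = src g" "trg f = trg g" "Ide U \<box> f = Ide U \<box> g"
  shows "f = g"
proof (rule cancel_unitary_right)
  show "f \<circ>\<circ> Lu (src f) = g \<circ>\<circ> Lu (src f)"
    using assms Lu_conj[of f] Lu_conj[of g] by simp
qed (use assms arr_obj in \<open>auto simp: unitary_arr_intros\<close>)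
lemma cancel_atens_Ide_U:
  assumes "arr f" "arr g" "src f = src g" "trg f = trg g" "f \<box> Ide U = g \<box> Ide U"
  shows "f = g"
proof (rule cancel_unitary_right)
  show "f \<circ>\<circ> Ru (src f) = g \<circ>\<circ> Ru (src f)"
    using assms Ru_conj[of f] Ru_conj[of g] by simp
qed (use assms arr_obj in \<open>auto simp: unitary_arr_intros\<close>)

lemma Lu_atens:
  assumes o: "a \<in> obj" "b \<in> obj"
  shows "Lu (a \<odot> b) \<circ>\<circ> As U a b = Lu a \<box> Ide b"
proof -
  let ?J = "As U (U \<odot> a) b \<circ>\<circ> (As U U a \<box> Ide b)"
  have "(Ide U \<box> (Lu (a \<odot> b) \<circ>\<circ> As U a b)) \<circ>\<circ> ?J
     = (Ide U \<box> Lu (a \<odot> b)) \<circ>\<circ> (Ide U \<box> As U a b) \<circ>\<circ> As U (U \<odot> a) b \<circ>\<circ> (As U U a \<box> Ide b)"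
    using o by (simp add: interchange_Ide_left acomp_assoc)
  also have "\<dots> = (Ide U \<box> Lu (a \<odot> b)) \<circ>\<circ> As U U (a \<odot> b) \<circ>\<circ> As (U \<odot> U) a b"
    using o pentagon[of U U a b] by (simp only: arr_typing acomp_assoc)
  also have "\<dots> = (Ru U \<box> Ide (a \<odot> b)) \<circ>\<circ> As (U \<odot> U) a b"
    using o acomp_rewrite[OF triangle[of U "a \<odot> b"]] by (simp only: arr_typing acomp_assoc)
  also have "\<dots> = (Ru U \<box> (Ide a \<box> Ide b)) \<circ>\<circ> As (U \<odot> U) a b"
    using o by (simp only: arr_typing atens_Ide)
  also have "\<dots> = As U a b \<circ>\<circ> ((Ru U \<box> Ide a) \<box> Ide b)"
    using o As_natural[of "Ru U" "Ide a" "Ide b" "U \<odot> U" a b U a b] by (simp only: arr_typing)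
  also have "\<dots> = As U a b \<circ>\<circ> (((Ide U \<box> Lu a) \<circ>\<circ> As U U a) \<box> Ide b)"
    using o triangle[of U a] by (simp only: arr_typing)
  also have "\<dots> = As U a b \<circ>\<circ> ((Ide U \<box> Lu a) \<box> Ide b) \<circ>\<circ> (As U U a \<box> Ide b)"
    using o by (simp add: interchange_Ide_right)
  also have "\<dots> = (Ide U \<box> (Lu a \<box> Ide b)) \<circ>\<circ> ?J"
    using o acomp_rewrite[OF As_natural[of "Ide U" "Lu a" "Ide b" U "U \<odot> a" b U a b]]
    by (simp only: arr_typing acomp_assoc)
  finally have "(Ide U \<box> (Lu (a \<odot> b) \<circ>\<circ> As U a b)) \<circ>\<circ> ?J = (Ide U \<box> (Lu a \<box> Ide b)) \<circ>\<circ> ?J" .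
  then have "Ide U \<box> (Lu (a \<odot> b) \<circ>\<circ> As U a b) = Ide U \<box> (Lu a \<box> Ide b)"
    by (rule cancel_unitary_right[rotated 5]) (use o in \<open>simp_all add: unitary_arr_intros\<close>)
  then show ?thesis
    by (rule cancel_Ide_U_atens[rotated 4]) (use o in \<open>simp_all only: arr_typing\<close>)
qed

lemma Ru_atens:
  assumes o: "X \<in> obj" "a \<in> obj"
  shows "(Ide X \<box> Ru a) \<circ>\<circ> As X a U = Ru (X \<odot> a)"
proof -
  have "As X a U \<circ>\<circ> (((Ide X \<box> Ru a) \<circ>\<circ> As X a U) \<box> Ide U)
      = As X a U \<circ>\<circ> ((Ide X \<box> Ru a) \<box> Ide U) \<circ>\<circ> (As X a U \<box> Ide U)"
    using o by (simp add: interchange_Ide_right)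
  also have "\<dots> = (Ide X \<box> (Ru a \<box> Ide U)) \<circ>\<circ> As X (a \<odot> U) U \<circ>\<circ> (As X a U \<box> Ide U)"
    using o acomp_rewrite[OF As_natural[of "Ide X" "Ru a" "Ide U" X "a \<odot> U" U X a U]]
    by (simp only: arr_typing acomp_assoc)
  also have "\<dots> = (Ide X \<box> ((Ide a \<box> Lu U) \<circ>\<circ> As a U U)) \<circ>\<circ> As X (a \<odot> U) U \<circ>\<circ> (As X a U \<box> Ide U)"
    using o triangle[of a U] by (simp only: arr_typing)
  also have "\<dots> = (Ide X \<box> (Ide a \<box> Lu U)) \<circ>\<circ> (Ide X \<box> As a U U) \<circ>\<circ> As X (a \<odot> U) U
      \<circ>\<circ> (As X a U \<box> Ide U)"
    using o by (simp add: interchange_Ide_left acomp_assoc)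
  also have "\<dots> = (Ide X \<box> (Ide a \<box> Lu U)) \<circ>\<circ> As X a (U \<odot> U) \<circ>\<circ> As (X \<odot> a) U U"
    using o pentagon[of X a U U] by (simp only: arr_typing acomp_assoc)
  also have "\<dots> = As X a U \<circ>\<circ> ((Ide X \<box> Ide a) \<box> Lu U) \<circ>\<circ> As (X \<odot> a) U U"
    using o acomp_rewrite[OF As_natural[of "Ide X" "Ide a" "Lu U" X a "U \<odot> U" X a U, symmetric]]
    by (simp only: arr_typing acomp_assoc)
  also have "\<dots> = As X a U \<circ>\<circ> (Ide (X \<odot> a) \<box> Lu U) \<circ>\<circ> As (X \<odot> a) U U"
    using o by (simp only: arr_typing atens_Ide)
  also have "\<dots> = As X a U \<circ>\<circ> (Ru (X \<odot> a) \<box> Ide U)"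
    using o triangle[of "X \<odot> a" U] by (simp only: arr_typing)
  finally have "As X a U \<circ>\<circ> (((Ide X \<box> Ru a) \<circ>\<circ> As X a U) \<box> Ide U)
      = As X a U \<circ>\<circ> (Ru (X \<odot> a) \<box> Ide U)" .
  then have "((Ide X \<box> Ru a) \<circ>\<circ> As X a U) \<box> Ide U = Ru (X \<odot> a) \<box> Ide U"
    by (rule cancel_unitary_left[rotated 5]) (use o in \<open>simp_all add: unitary_arr_intros\<close>)
  then show ?thesis
    by (rule cancel_atens_Ide_U[rotated 4]) (use o in \<open>simp_all only: arr_typing\<close>)
qed

lemma Lu_U_atens:
  assumes o: "a \<in> obj"
  shows "Lu (U \<odot> a) = Ide U \<box> Lu a"
proof -
  have "Lu a \<circ>\<circ> Lu (U \<odot> a) = Lu a \<circ>\<circ> (Ide U \<box> Lu a)"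
    using Lu_natural[of "Lu a" "U \<odot> a" a] o by simp
  then show ?thesis
    by (rule cancel_unitary_left[rotated 5]) (use o in \<open>simp_all add: unitary_arr_intros\<close>)
qed

lemma Lu_U_eq_Ru_U: "Lu U = Ru U"
proof -
  have "Lu U \<box> Ide U = (Ide U \<box> Lu U) \<circ>\<circ> As U U U"
    using Lu_atens[of U U] Lu_U_atens[of U] by simp
  also have "\<dots> = Ru U \<box> Ide U"
    using triangle[of U U] by simp
  finally show ?thesis
    by (rule cancel_atens_Ide_U[rotated 4]) simp_all
qed

lemma triangle_inv:
  assumes o: "X \<in> obj" "a \<in> obj"
  shows "As X U a \<circ>\<circ> ((Ru X)\<^sup>\<star> \<box> Ide a) = Ide X \<box> (Lu a)\<^sup>\<star>"
proof -
  have "(Ide X \<box> Lu a) \<circ>\<circ> As X U a \<circ>\<circ> ((Ru X)\<^sup>\<star> \<box> Ide a) = (Ru X \<box> Ide a) \<circ>\<circ> ((Ru X)\<^sup>\<star> \<box> Ide a)"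
    using o acomp_rewrite[OF triangle[of X a]] by simp
  also have "\<dots> = Ide (X \<odot> a)"
    using o by (simp add: interchange[symmetric] unitary_arr_inv unitary_arr_Ru Ide_acomp atens_Ide)
  also have "\<dots> = (Ide X \<box> Lu a) \<circ>\<circ> (Ide X \<box> (Lu a)\<^sup>\<star>)"
    using o by (simp add: interchange[symmetric] unitary_arr_inv unitary_arr_Lu Ide_acomp atens_Ide)
  finally show ?thesis
    by (rule cancel_unitary_left[rotated 5]) (use o in \<open>simp_all add: unitary_arr_intros\<close>)
qed

section \<open>Dualities and mates\<close>

definition zigzag :: "'o \<Rightarrow> 'o \<Rightarrow> ('o, 'm) arrow \<Rightarrow> ('o, 'm) arrow \<Rightarrow> ('o, 'm) arrow" where
  "zigzag a b e c = Ru a \<circ>\<circ> (Ide a \<box> e) \<circ>\<circ> As a b a \<circ>\<circ> (c \<box> Ide a) \<circ>\<circ> (Lu a)\<^sup>\<star>"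

text \<open>For \<open>w : x \<otimes> a \<rightarrow> 1\<close> and \<open>y : 1 \<rightarrow> a \<otimes> b\<close>, the morphism \<open>x \<rightarrow> b\<close> obtained by bending the
  \<open>a\<close>-strand; \<^term>\<open>mate b a b e c\<close> is the second zigzag composite of \<open>(e, c)\<close>.\<close>

definition mate :: "'o \<Rightarrow> 'o \<Rightarrow> 'o \<Rightarrow> ('o, 'm) arrow \<Rightarrow> ('o, 'm) arrow \<Rightarrow> ('o, 'm) arrow" where
  "mate x a b w y = Lu b \<circ>\<circ> (w \<box> Ide b) \<circ>\<circ> (As x a b)\<^sup>\<star> \<circ>\<circ> (Ide x \<box> y) \<circ>\<circ> (Ru x)\<^sup>\<star>"

definition duality :: "'o \<Rightarrow> 'o \<Rightarrow> ('o, 'm) arrow \<Rightarrow> ('o, 'm) arrow \<Rightarrow> bool" where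
  "duality a b e c \<longleftrightarrow> a \<in> obj \<and> b \<in> obj \<and>
    arr e \<and> src e = b \<odot> a \<and> trg e = U \<and> arr c \<and> src c = U \<and> trg c = a \<odot> b \<and>
    zigzag a b e c = Ide a \<and> mate b a b e c = Ide b"

lemma arr_mate:
  assumes "x \<in> obj" "a \<in> obj" "b \<in> obj"
    and "arr w" "src w = x \<odot> a" "trg w = U" "arr y" "src y = U" "trg y = a \<odot> b"
  shows "arr (mate x a b w y)" "src (mate x a b w y) = x" "trg (mate x a b w y) = b"
  using assms unfolding mate_def by simp_all

lemma eval_atens_mate:
  assumes o: "X \<in> obj" "a \<in> obj" "b \<in> obj"
    and e: "arr e" "src e = b \<odot> a" "trg e = U"
    and c: "arr c" "src c = U" "trg c = a \<odot> b"
    and w: "arr w" "src w = X \<odot> a" "trg w = U"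
  shows "e \<circ>\<circ> (mate X a b w c \<box> Ide a) = w \<circ>\<circ> Ru (X \<odot> a) \<circ>\<circ> (Ide (X \<odot> a) \<box> e) \<circ>\<circ> As (X \<odot> a) b a
    \<circ>\<circ> ((As X a b)\<^sup>\<star> \<box> Ide a) \<circ>\<circ> ((Ide X \<box> c) \<box> Ide a) \<circ>\<circ> ((Ru X)\<^sup>\<star> \<box> Ide a)"
proof -
  have "e \<circ>\<circ> (mate X a b w c \<box> Ide a) = e \<circ>\<circ> (Lu b \<box> Ide a) \<circ>\<circ> ((w \<box> Ide b) \<box> Ide a)
      \<circ>\<circ> ((As X a b)\<^sup>\<star> \<box> Ide a) \<circ>\<circ> ((Ide X \<box> c) \<box> Ide a) \<circ>\<circ> ((Ru X)\<^sup>\<star> \<box> Ide a)"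
    unfolding mate_def using o e c w by (simp add: interchange_Ide_right)
  also have "\<dots> = Lu U \<circ>\<circ> (Ide U \<box> e) \<circ>\<circ> As U b a \<circ>\<circ> ((w \<box> Ide b) \<box> Ide a)
      \<circ>\<circ> ((As X a b)\<^sup>\<star> \<box> Ide a) \<circ>\<circ> ((Ide X \<box> c) \<box> Ide a) \<circ>\<circ> ((Ru X)\<^sup>\<star> \<box> Ide a)"
  proof -
    have "e \<circ>\<circ> (Lu b \<box> Ide a) = e \<circ>\<circ> Lu (b \<odot> a) \<circ>\<circ> As U b a"
      using Lu_atens[of b a] o by simp
    also have "\<dots> = Lu U \<circ>\<circ> (Ide U \<box> e) \<circ>\<circ> As U b a"
      using acomp_rewrite[OF Lu_natural[of e "b \<odot> a" U]] o e by (simp add: acomp_assoc)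
    finally have "e \<circ>\<circ> (Lu b \<box> Ide a) = Lu U \<circ>\<circ> (Ide U \<box> e) \<circ>\<circ> As U b a" .
    from acomp_rewrite[OF this] show ?thesis
      by (simp only: acomp_assoc)
  qed
  also have "\<dots> = Lu U \<circ>\<circ> (Ide U \<box> e) \<circ>\<circ> (w \<box> (Ide b \<box> Ide a)) \<circ>\<circ> As (X \<odot> a) b a
      \<circ>\<circ> ((As X a b)\<^sup>\<star> \<box> Ide a) \<circ>\<circ> ((Ide X \<box> c) \<box> Ide a) \<circ>\<circ> ((Ru X)\<^sup>\<star> \<box> Ide a)"
    using o e c w acomp_rewrite[OF As_natural[of w "Ide b" "Ide a" "X \<odot> a" b a U b a]]
    by (simp only: arr_typing acomp_assoc)
  also have "\<dots> = Lu U \<circ>\<circ> (w \<box> Ide U) \<circ>\<circ> (Ide (X \<odot> a) \<box> e) \<circ>\<circ> As (X \<odot> a) b a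
      \<circ>\<circ> ((As X a b)\<^sup>\<star> \<box> Ide a) \<circ>\<circ> ((Ide X \<box> c) \<box> Ide a) \<circ>\<circ> ((Ru X)\<^sup>\<star> \<box> Ide a)"
  proof -
    have "(Ide U \<box> e) \<circ>\<circ> (w \<box> (Ide b \<box> Ide a)) = w \<box> e"
      using o e w atens_factor_right[of w e U "b \<odot> a"] by (simp add: atens_Ide)
    also have "\<dots> = (w \<box> Ide U) \<circ>\<circ> (Ide (X \<odot> a) \<box> e)"
      using o e w by (simp add: atens_factor_left)
    finally have "(Ide U \<box> e) \<circ>\<circ> (w \<box> (Ide b \<box> Ide a)) = (w \<box> Ide U) \<circ>\<circ> (Ide (X \<odot> a) \<box> e)" .
    from acomp_rewrite[OF this] show ?thesis
      by (simp only: acomp_assoc)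
  qed
  also have "\<dots> = w \<circ>\<circ> Ru (X \<odot> a) \<circ>\<circ> (Ide (X \<odot> a) \<box> e) \<circ>\<circ> As (X \<odot> a) b a
      \<circ>\<circ> ((As X a b)\<^sup>\<star> \<box> Ide a) \<circ>\<circ> ((Ide X \<box> c) \<box> Ide a) \<circ>\<circ> ((Ru X)\<^sup>\<star> \<box> Ide a)"
    using acomp_rewrite[OF Ru_natural[of w "X \<odot> a" U]] Lu_U_eq_Ru_U o w by (simp add: acomp_assoc)
  finally show ?thesis .
qed

lemma atens_zigzag:
  assumes o: "X \<in> obj" "a \<in> obj" "b \<in> obj"
    and e: "arr e" "src e = b \<odot> a" "trg e = U"
    and c: "arr c" "src c = U" "trg c = a \<odot> b"
  shows "Ru (X \<odot> a) \<circ>\<circ> (Ide (X \<odot> a) \<box> e) \<circ>\<circ> As (X \<odot> a) b a \<circ>\<circ> ((As X a b)\<^sup>\<star> \<box> Ide a)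
    \<circ>\<circ> ((Ide X \<box> c) \<box> Ide a) \<circ>\<circ> ((Ru X)\<^sup>\<star> \<box> Ide a) = Ide X \<box> zigzag a b e c"
proof -
  have "Ru (X \<odot> a) \<circ>\<circ> (Ide (X \<odot> a) \<box> e) \<circ>\<circ> As (X \<odot> a) b a \<circ>\<circ> ((As X a b)\<^sup>\<star> \<box> Ide a)
      \<circ>\<circ> ((Ide X \<box> c) \<box> Ide a) \<circ>\<circ> ((Ru X)\<^sup>\<star> \<box> Ide a)
    = (Ide X \<box> Ru a) \<circ>\<circ> As X a U \<circ>\<circ> ((Ide X \<box> Ide a) \<box> e) \<circ>\<circ> As (X \<odot> a) b a
      \<circ>\<circ> ((As X a b)\<^sup>\<star> \<box> Ide a) \<circ>\<circ> ((Ide X \<box> c) \<box> Ide a) \<circ>\<circ> ((Ru X)\<^sup>\<star> \<box> Ide a)"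
    using o by (simp add: Ru_atens[symmetric] acomp_assoc atens_Ide)
  also have "\<dots> = (Ide X \<box> Ru a) \<circ>\<circ> (Ide X \<box> (Ide a \<box> e)) \<circ>\<circ> As X a (b \<odot> a) \<circ>\<circ> As (X \<odot> a) b a
      \<circ>\<circ> ((As X a b)\<^sup>\<star> \<box> Ide a) \<circ>\<circ> ((Ide X \<box> c) \<box> Ide a) \<circ>\<circ> ((Ru X)\<^sup>\<star> \<box> Ide a)"
    using o e c acomp_rewrite[OF As_natural[of "Ide X" "Ide a" e X a "b \<odot> a" X a U]]
    by (simp only: arr_typing acomp_assoc)
  also have "\<dots> = (Ide X \<box> Ru a) \<circ>\<circ> (Ide X \<box> (Ide a \<box> e)) \<circ>\<circ> (Ide X \<box> As a b a) \<circ>\<circ> As X (a \<odot> b) a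
      \<circ>\<circ> ((As X a b \<box> Ide a) \<circ>\<circ> ((As X a b)\<^sup>\<star> \<box> Ide a)) \<circ>\<circ> ((Ide X \<box> c) \<box> Ide a) \<circ>\<circ> ((Ru X)\<^sup>\<star> \<box> Ide a)"
    using o e c acomp_rewrite[OF pentagon[of X a b a]] by (simp only: arr_typing acomp_assoc)
  also have "\<dots> = (Ide X \<box> Ru a) \<circ>\<circ> (Ide X \<box> (Ide a \<box> e)) \<circ>\<circ> (Ide X \<box> As a b a) \<circ>\<circ> As X (a \<odot> b) a
      \<circ>\<circ> ((Ide X \<box> c) \<box> Ide a) \<circ>\<circ> ((Ru X)\<^sup>\<star> \<box> Ide a)"
  proof -
    have "(As X a b \<box> Ide a) \<circ>\<circ> ((As X a b)\<^sup>\<star> \<box> Ide a) = Ide ((X \<odot> (a \<odot> b)) \<odot> a)"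
      using o by (simp add: interchange[symmetric] unitary_arr_inv unitary_arr_As Ide_acomp atens_Ide)
    then show ?thesis
      using o c Ide_acomp by simp
  qed
  also have "\<dots> = (Ide X \<box> Ru a) \<circ>\<circ> (Ide X \<box> (Ide a \<box> e)) \<circ>\<circ> (Ide X \<box> As a b a) \<circ>\<circ> (Ide X \<box> (c \<box> Ide a))
      \<circ>\<circ> As X U a \<circ>\<circ> ((Ru X)\<^sup>\<star> \<box> Ide a)"
    using o e c acomp_rewrite[OF As_natural[of "Ide X" c "Ide a" X U a X "a \<odot> b" a]]
    by (simp only: arr_typing acomp_assoc)
  also have "\<dots> = (Ide X \<box> Ru a) \<circ>\<circ> (Ide X \<box> (Ide a \<box> e)) \<circ>\<circ> (Ide X \<box> As a b a) \<circ>\<circ> (Ide X \<box> (c \<box> Ide a))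
      \<circ>\<circ> (Ide X \<box> (Lu a)\<^sup>\<star>)"
    using o triangle_inv[of X a] by simp
  also have "\<dots> = Ide X \<box> zigzag a b e c"
    unfolding zigzag_def using o e c by (simp add: interchange_Ide_left)
  finally show ?thesis .
qed

lemma eval_mate:
  assumes "X \<in> obj" "a \<in> obj" "b \<in> obj"
    and "arr e" "src e = b \<odot> a" "trg e = U" "arr c" "src c = U" "trg c = a \<odot> b"
    and "arr w" "src w = X \<odot> a" "trg w = U"
    and "zigzag a b e c = Ide a"
  shows "e \<circ>\<circ> (mate X a b w c \<box> Ide a) = w"
  using eval_atens_mate[of X a b e c w] atens_zigzag[of X a b e c] assms
  by (simp add: acomp_assoc atens_Ide acomp_Ide)

lemma mate_precomp:
  assumes o: "X \<in> obj" "Y \<in> obj" "a \<in> obj" "b \<in> obj"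
    and z: "arr z" "src z = X" "trg z = Y"
    and w: "arr w" "src w = Y \<odot> a" "trg w = U"
    and y: "arr y" "src y = U" "trg y = a \<odot> b"
  shows "mate X a b (w \<circ>\<circ> (z \<box> Ide a)) y = mate Y a b w y \<circ>\<circ> z"
proof -
  have "mate X a b (w \<circ>\<circ> (z \<box> Ide a)) y
      = Lu b \<circ>\<circ> (w \<box> Ide b) \<circ>\<circ> ((z \<box> Ide a) \<box> Ide b) \<circ>\<circ> (As X a b)\<^sup>\<star> \<circ>\<circ> (Ide X \<box> y) \<circ>\<circ> (Ru X)\<^sup>\<star>"
    unfolding mate_def using o z w y by (simp add: interchange_Ide_right acomp_assoc)
  also have "\<dots> = Lu b \<circ>\<circ> (w \<box> Ide b) \<circ>\<circ> (As Y a b)\<^sup>\<star> \<circ>\<circ> (z \<box> (Ide a \<box> Ide b)) \<circ>\<circ> (Ide X \<box> y) \<circ>\<circ> (Ru X)\<^sup>\<star>"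
    using o z w y acomp_rewrite[OF As_inv_natural[of z "Ide a" "Ide b" X a b Y a b, symmetric]]
    by (simp only: arr_typing acomp_assoc)
  also have "\<dots> = Lu b \<circ>\<circ> (w \<box> Ide b) \<circ>\<circ> (As Y a b)\<^sup>\<star> \<circ>\<circ> (Ide Y \<box> y) \<circ>\<circ> (z \<box> Ide U) \<circ>\<circ> (Ru X)\<^sup>\<star>"
  proof -
    have "(z \<box> (Ide a \<box> Ide b)) \<circ>\<circ> (Ide X \<box> y) = (Ide Y \<box> y) \<circ>\<circ> (z \<box> Ide U)"
      using o z y by (simp add: atens_Ide atens_factor_left atens_factor_right)
    from acomp_rewrite[OF this] show ?thesis
      by (simp only: acomp_assoc)
  qed
  also have "\<dots> = Lu b \<circ>\<circ> (w \<box> Ide b) \<circ>\<circ> (As Y a b)\<^sup>\<star> \<circ>\<circ> (Ide Y \<box> y) \<circ>\<circ> (Ru Y)\<^sup>\<star> \<circ>\<circ> z"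
    using o z Ru_inv_natural[of z X Y] by simp
  also have "\<dots> = mate Y a b w y \<circ>\<circ> z"
    unfolding mate_def by (simp add: acomp_assoc)
  finally show ?thesis .
qed

lemma mate_postcomp:
  assumes o: "X \<in> obj" "a \<in> obj" "b \<in> obj" "b' \<in> obj"
    and z: "arr z" "src z = b" "trg z = b'"
    and w: "arr w" "src w = X \<odot> a" "trg w = U"
    and y: "arr y" "src y = U" "trg y = a \<odot> b"
  shows "mate X a b' w ((Ide a \<box> z) \<circ>\<circ> y) = z \<circ>\<circ> mate X a b w y"
proof -
  have "mate X a b' w ((Ide a \<box> z) \<circ>\<circ> y)
      = Lu b' \<circ>\<circ> (w \<box> Ide b') \<circ>\<circ> (As X a b')\<^sup>\<star> \<circ>\<circ> (Ide X \<box> (Ide a \<box> z)) \<circ>\<circ> (Ide X \<box> y) \<circ>\<circ> (Ru X)\<^sup>\<star>"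
    unfolding mate_def using o z w y by (simp add: interchange_Ide_left acomp_assoc)
  also have "\<dots> = Lu b' \<circ>\<circ> (w \<box> Ide b') \<circ>\<circ> ((Ide X \<box> Ide a) \<box> z)
      \<circ>\<circ> (As X a b)\<^sup>\<star> \<circ>\<circ> (Ide X \<box> y) \<circ>\<circ> (Ru X)\<^sup>\<star>"
    using o z w y acomp_rewrite[OF As_inv_natural[of "Ide X" "Ide a" z X a b X a b']]
    by (simp only: arr_typing acomp_assoc)
  also have "\<dots> = Lu b' \<circ>\<circ> (Ide U \<box> z) \<circ>\<circ> (w \<box> Ide b) \<circ>\<circ> (As X a b)\<^sup>\<star> \<circ>\<circ> (Ide X \<box> y) \<circ>\<circ> (Ru X)\<^sup>\<star>"
  proof -
    have "(w \<box> Ide b') \<circ>\<circ> ((Ide X \<box> Ide a) \<box> z) = (Ide U \<box> z) \<circ>\<circ> (w \<box> Ide b)"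
      using o z w by (simp add: atens_Ide atens_factor_left atens_factor_right)
    from acomp_rewrite[OF this] show ?thesis
      by (simp only: acomp_assoc)
  qed
  also have "\<dots> = z \<circ>\<circ> mate X a b w y"
    unfolding mate_def using acomp_rewrite[OF Lu_natural[of z b b']] z by (simp only: acomp_assoc)
  finally show ?thesis .
qed

lemma mate_slide:
  assumes o: "X \<in> obj" "a \<in> obj" "b \<in> obj"
    and f: "arr f" "src f = a" "trg f = a"
    and w: "arr w" "src w = X \<odot> a" "trg w = U"
    and y: "arr y" "src y = U" "trg y = a \<odot> b"
  shows "mate X a b w ((f \<box> Ide b) \<circ>\<circ> y) = mate X a b (w \<circ>\<circ> (Ide X \<box> f)) y"
proof -
  have "mate X a b w ((f \<box> Ide b) \<circ>\<circ> y)
      = Lu b \<circ>\<circ> (w \<box> Ide b) \<circ>\<circ> (As X a b)\<^sup>\<star> \<circ>\<circ> (Ide X \<box> (f \<box> Ide b)) \<circ>\<circ> (Ide X \<box> y) \<circ>\<circ> (Ru X)\<^sup>\<star>"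
    unfolding mate_def using o f w y by (simp add: interchange_Ide_left acomp_assoc)
  also have "\<dots> = Lu b \<circ>\<circ> (w \<box> Ide b) \<circ>\<circ> ((Ide X \<box> f) \<box> Ide b) \<circ>\<circ> (As X a b)\<^sup>\<star> \<circ>\<circ> (Ide X \<box> y) \<circ>\<circ> (Ru X)\<^sup>\<star>"
    using o f w y acomp_rewrite[OF As_inv_natural[of "Ide X" f "Ide b" X a b X a b]]
    by (simp only: arr_typing acomp_assoc)
  also have "\<dots> = mate X a b (w \<circ>\<circ> (Ide X \<box> f)) y"
    unfolding mate_def using o f w y by (simp add: interchange_Ide_right acomp_assoc)
  finally show ?thesis .
qed

lemma mate_of_eval:
  assumes o: "X \<in> obj" "a \<in> obj" "b \<in> obj"
    and z: "arr z" "src z = X" "trg z = b"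
    and e: "arr e" "src e = b \<odot> a" "trg e = U"
    and c: "arr c" "src c = U" "trg c = a \<odot> b"
    and "mate b a b e c = Ide b"
  shows "mate X a b (e \<circ>\<circ> (z \<box> Ide a)) c = z"
  using mate_precomp[of X b a b z e c] assms by (simp add: Ide_acomp)

lemma ev_faithful:
  assumes o: "a \<in> obj" "b \<in> obj"
    and T: "arr T" "src T = a" "trg T = a"
    and e: "arr e" "src e = b \<odot> a" "trg e = U"
    and c: "arr c" "src c = U" "trg c = a \<odot> b"
    and z: "zigzag a b e c = Ide a"
    and h: "e \<circ>\<circ> (Ide b \<box> T) = e"
  shows "T = Ide a"
proof -
  have "Ide a = Ru a \<circ>\<circ> (Ide a \<box> (e \<circ>\<circ> (Ide b \<box> T))) \<circ>\<circ> As a b a \<circ>\<circ> (c \<box> Ide a) \<circ>\<circ> (Lu a)\<^sup>\<star>"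
    using z h unfolding zigzag_def by simp
  also have "\<dots> = Ru a \<circ>\<circ> (Ide a \<box> e) \<circ>\<circ> (Ide a \<box> (Ide b \<box> T)) \<circ>\<circ> As a b a \<circ>\<circ> (c \<box> Ide a) \<circ>\<circ> (Lu a)\<^sup>\<star>"
    using o T e c by (simp add: interchange_Ide_left acomp_assoc)
  also have "\<dots> = Ru a \<circ>\<circ> (Ide a \<box> e) \<circ>\<circ> As a b a \<circ>\<circ> ((Ide a \<box> Ide b) \<box> T) \<circ>\<circ> (c \<box> Ide a) \<circ>\<circ> (Lu a)\<^sup>\<star>"
    using o T e c acomp_rewrite[OF As_natural[of "Ide a" "Ide b" T a b a a b a, symmetric]]
    by (simp only: arr_typing acomp_assoc)
  also have "\<dots> = Ru a \<circ>\<circ> (Ide a \<box> e) \<circ>\<circ> As a b a \<circ>\<circ> (c \<box> Ide a) \<circ>\<circ> (Ide U \<box> T) \<circ>\<circ> (Lu a)\<^sup>\<star>"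
  proof -
    have "((Ide a \<box> Ide b) \<box> T) \<circ>\<circ> (c \<box> Ide a) = (c \<box> Ide a) \<circ>\<circ> (Ide U \<box> T)"
      using o T c by (simp add: atens_Ide atens_factor_left atens_factor_right)
    from acomp_rewrite[OF this] show ?thesis
      by (simp only: acomp_assoc)
  qed
  also have "\<dots> = zigzag a b e c \<circ>\<circ> T"
    unfolding zigzag_def using o T Lu_inv_natural[of T a a] by (simp add: acomp_assoc)
  also have "\<dots> = T"
    using z T by (simp add: Ide_acomp)
  finally show ?thesis by simp
qed

lemma dualityD:
  assumes "duality a b e c"
  shows "a \<in> obj" "b \<in> obj" "arr e" "src e = b \<odot> a" "trg e = U" "arr c" "src c = U" "trg c = a \<odot> b"
    and "zigzag a b e c = Ide a" "mate b a b e c = Ide b"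
  using assms unfolding duality_def by simp_all

lemma duality_eval_cancel:
  assumes "duality a b e c" "arr z" "src z = b" "trg z = b" "e \<circ>\<circ> (z \<box> Ide a) = e"
  shows "z = Ide b"
  using mate_of_eval[of b a b z e c] dualityD[OF assms(1)] assms by simp

lemma duality_comparison:
  assumes d1: "duality a b1 e1 c1" and d2: "duality a b2 e2 c2"
  defines "h \<equiv> mate b2 a b1 e2 c1" and "k \<equiv> mate b1 a b2 e1 c2"
  shows "arr h" "src h = b2" "trg h = b1" "arr k" "src k = b1" "trg k = b2"
    and "e1 \<circ>\<circ> (h \<box> Ide a) = e2" "k \<circ>\<circ> h = Ide b2" "h \<circ>\<circ> k = Ide b1"
proof -
  note d1 = dualityD[OF d1] and d2 = dualityD[OF d2]
  show h: "arr h" "src h = b2" "trg h = b1" and k: "arr k" "src k = b1" "trg k = b2"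
    unfolding h_def k_def using arr_mate d1 d2 by auto
  show eh: "e1 \<circ>\<circ> (h \<box> Ide a) = e2"
    unfolding h_def using d1 d2 by (intro eval_mate) auto
  have ek: "e2 \<circ>\<circ> (k \<box> Ide a) = e1"
    unfolding k_def using d1 d2 by (intro eval_mate) auto
  show "k \<circ>\<circ> h = Ide b2"
    using d1 d2 h k eh ek
    by (intro duality_eval_cancel[OF assms(2)])
      (simp_all add: interchange_Ide_right flip: acomp_assoc)
  show "h \<circ>\<circ> k = Ide b1"
    using d1 d2 h k eh ek
    by (intro duality_eval_cancel[OF assms(1)])
      (simp_all add: interchange_Ide_right flip: acomp_assoc)
qed

section \<open>Uniqueness of the parity\<close>

definition duality_transpose :: "'o \<Rightarrow> 'o \<Rightarrow>
    ('o, 'm) arrow \<Rightarrow> ('o, 'm) arrow \<Rightarrow> ('o, 'm) arrow \<Rightarrow> ('o, 'm) arrow" where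
  "duality_transpose a b e c T = mate b a b (e \<circ>\<circ> (Ide b \<box> T)) c"

lemma arr_duality_transpose:
  assumes "duality a b e c" "arr T" "src T = a" "trg T = a"
  shows "arr (duality_transpose a b e c T)" "src (duality_transpose a b e c T) = b"
    "trg (duality_transpose a b e c T) = b"
  unfolding duality_transpose_def using arr_mate dualityD[OF assms(1)] assms(2-) by auto

lemma eval_duality_transpose:
  assumes "duality a b e c" "arr T" "src T = a" "trg T = a"
  shows "e \<circ>\<circ> (duality_transpose a b e c T \<box> Ide a) = e \<circ>\<circ> (Ide b \<box> T)"
  unfolding duality_transpose_def using dualityD[OF assms(1)] assms(2-) by (intro eval_mate) auto

lemma duality_transpose_involution:
  assumes d: "duality a b e c" and T: "arr T" "src T = a" "trg T = a" "T \<circ>\<circ> T = Ide a"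
  shows "duality_transpose a b e c T \<circ>\<circ> duality_transpose a b e c T = Ide b"
proof (rule duality_eval_cancel[OF d])
  let ?R = "duality_transpose a b e c T"
  note d = dualityD[OF d] and R = arr_duality_transpose[OF assms(1) T(1-3)]
  and eR = eval_duality_transpose[OF assms(1) T(1-3)]
  have "e \<circ>\<circ> ((?R \<circ>\<circ> ?R) \<box> Ide a) = e \<circ>\<circ> (?R \<box> Ide a) \<circ>\<circ> (?R \<box> Ide a)"
    using d R by (simp add: interchange_Ide_right acomp_assoc)
  also have "\<dots> = e \<circ>\<circ> (Ide b \<box> T) \<circ>\<circ> (?R \<box> Ide a)"
    using eR by (simp flip: acomp_assoc)
  also have "\<dots> = e \<circ>\<circ> (?R \<box> Ide a) \<circ>\<circ> (Ide b \<box> T)"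
    using d R T by (simp add: atens_factor_left atens_factor_right)
  also have "\<dots> = e \<circ>\<circ> (Ide b \<box> T) \<circ>\<circ> (Ide b \<box> T)"
    using eR by (simp flip: acomp_assoc)
  also have "\<dots> = e"
    using d T by (simp add: interchange_Ide_left[symmetric] atens_Ide acomp_Ide)
  finally show "e \<circ>\<circ> ((?R \<circ>\<circ> ?R) \<box> Ide a) = e" .
qed (use arr_duality_transpose[OF assms(1) T(1-3)] in auto)

lemma duality_transpose_eq_Ide_imp:
  assumes d: "duality a b e c" and T: "arr T" "src T = a" "trg T = a"
    and "duality_transpose a b e c T = Ide b"
  shows "T = Ide a"
proof (rule ev_faithful)
  show "e \<circ>\<circ> (Ide b \<box> T) = e"
    using eval_duality_transpose[OF d T] assms(5) dualityD[OF d] by (simp add: atens_Ide acomp_Ide)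
qed (use dualityD[OF d] T in auto)

lemma duality_transpose_conj:
  assumes d1: "duality a b1 e1 c1" and d2: "duality a b2 e2 c2"
    and h: "arr h" "src h = b2" "trg h = b1" and eh: "e1 \<circ>\<circ> (h \<box> Ide a) = e2"
    and T: "arr T" "src T = a" "trg T = a"
    and c2: "c2 = (Ide a \<box> h\<^sup>\<star>) \<circ>\<circ> (T \<box> Ide b1) \<circ>\<circ> c1"
  shows "h\<^sup>\<star> \<circ>\<circ> duality_transpose a b1 e1 c1 T \<circ>\<circ> h = Ide b2"
proof -
  note d1 = dualityD[OF d1] and d2 = dualityD[OF d2]
  have "Ide b2 = mate b2 a b2 (e1 \<circ>\<circ> (h \<box> Ide a)) ((Ide a \<box> h\<^sup>\<star>) \<circ>\<circ> ((T \<box> Ide b1) \<circ>\<circ> c1))"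
    using d2 eh c2 by simp
  also have "\<dots> = mate b1 a b2 e1 ((Ide a \<box> h\<^sup>\<star>) \<circ>\<circ> ((T \<box> Ide b1) \<circ>\<circ> c1)) \<circ>\<circ> h"
    by (rule mate_precomp) (use d1 d2 h T in auto)
  also have "\<dots> = h\<^sup>\<star> \<circ>\<circ> mate b1 a b1 e1 ((T \<box> Ide b1) \<circ>\<circ> c1) \<circ>\<circ> h"
    using mate_postcomp[of b1 a b1 b2 "h\<^sup>\<star>" e1 "(T \<box> Ide b1) \<circ>\<circ> c1"] d1 d2 h T
    by (simp add: acomp_assoc)
  also have "\<dots> = h\<^sup>\<star> \<circ>\<circ> duality_transpose a b1 e1 c1 T \<circ>\<circ> h"
    unfolding duality_transpose_def using mate_slide[of b1 a b1 T e1 c1] d1 T by simp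
  finally show ?thesis by simp
qed

lemma coev_twist:
  assumes d1: "duality a b1 e1 c1" and d2: "duality a b2 e2 c2"
    and h: "arr h" "src h = b2" "trg h = b1" and eh: "e1 \<circ>\<circ> (h \<box> Ide a) = e2"
    and A: "arr A" "src A = a" "trg A = a" "A \<circ>\<circ> A = Ide a"
    and B: "arr B" "src B = a" "trg B = a"
    and r1: "Br b1 a \<circ>\<circ> e1\<^sup>\<star> = (B \<box> Ide b1) \<circ>\<circ> c1"
    and r2: "Br b2 a \<circ>\<circ> e2\<^sup>\<star> = (A \<box> Ide b2) \<circ>\<circ> c2"
  shows "c2 = (Ide a \<box> h\<^sup>\<star>) \<circ>\<circ> ((A \<circ>\<circ> B) \<box> Ide b1) \<circ>\<circ> c1"
proof -
  note d1 = dualityD[OF d1] and d2 = dualityD[OF d2]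
  have "e2\<^sup>\<star> = (h\<^sup>\<star> \<box> Ide a) \<circ>\<circ> e1\<^sup>\<star>"
    using eh[symmetric] d1 by (simp add: adag_acomp adag_atens adag_Ide)
  then have "(A \<box> Ide b2) \<circ>\<circ> c2 = Br b2 a \<circ>\<circ> (h\<^sup>\<star> \<box> Ide a) \<circ>\<circ> e1\<^sup>\<star>"
    using r2 by simp
  also have "\<dots> = (Ide a \<box> h\<^sup>\<star>) \<circ>\<circ> Br b1 a \<circ>\<circ> e1\<^sup>\<star>"
    using d1 d2 h acomp_rewrite[OF Br_natural[of "h\<^sup>\<star>" "Ide a" b1 b2 a a]]
    by (simp only: arr_typing acomp_assoc)
  also have "\<dots> = (Ide a \<box> h\<^sup>\<star>) \<circ>\<circ> (B \<box> Ide b1) \<circ>\<circ> c1"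
    using r1 by simp
  finally have Ac2: "(A \<box> Ide b2) \<circ>\<circ> c2 = (Ide a \<box> h\<^sup>\<star>) \<circ>\<circ> (B \<box> Ide b1) \<circ>\<circ> c1" .
  have "c2 = (A \<box> Ide b2) \<circ>\<circ> (A \<box> Ide b2) \<circ>\<circ> c2"
    using d2 A by (simp add: interchange[symmetric] Ide_acomp atens_Ide flip: acomp_assoc)
  also have "\<dots> = (A \<box> Ide b2) \<circ>\<circ> (Ide a \<box> h\<^sup>\<star>) \<circ>\<circ> (B \<box> Ide b1) \<circ>\<circ> c1"
    using Ac2 by simp
  also have "\<dots> = (Ide a \<box> h\<^sup>\<star>) \<circ>\<circ> (A \<box> Ide b1) \<circ>\<circ> (B \<box> Ide b1) \<circ>\<circ> c1"
  proof -
    have "(A \<box> Ide b2) \<circ>\<circ> (Ide a \<box> h\<^sup>\<star>) = (Ide a \<box> h\<^sup>\<star>) \<circ>\<circ> (A \<box> Ide b1)"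
      using A h by (simp add: atens_factor_left atens_factor_right)
    from acomp_rewrite[OF this] show ?thesis
      by (simp only: acomp_assoc)
  qed
  also have "\<dots> = (Ide a \<box> h\<^sup>\<star>) \<circ>\<circ> ((A \<circ>\<circ> B) \<box> Ide b1) \<circ>\<circ> c1"
    using d1 A B by (simp add: interchange_Ide_right acomp_assoc)
  finally show ?thesis .
qed

lemma iso_positive_mor_adag_acomp:
  assumes "arr g" "src g = b" "trg g = b'" "arr k" "src k = b'" "trg k = b"
    and "g \<circ>\<circ> k = Ide b'" "k \<circ>\<circ> g = Ide b"
  shows "iso_positive C (mor (g\<^sup>\<star> \<circ>\<circ> g)) b"
proof -
  have "cmp C (mor k) (mor g) = ide b" "cmp C (mor g) (mor k) = ide b'"
    using assms mor_acomp[of k g] mor_acomp[of g k] arr_obj by auto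
  then have "iso C (mor g) b b'"
    unfolding iso_def using assms arrD by fastforce
  then show ?thesis
    unfolding iso_positive_def using assms arrD[OF assms(1)] by (auto simp: mor_acomp mor_adag)
qed

lemma commuting_involutions_acomp:
  assumes A: "arr A" "src A = a" "trg A = a" "A \<circ>\<circ> A = Ide a"
    and B: "arr B" "src B = a" "trg B = a" "B \<circ>\<circ> B = Ide a"
    and AB: "A \<circ>\<circ> B = B \<circ>\<circ> A"
  shows "(A \<circ>\<circ> B) \<circ>\<circ> (A \<circ>\<circ> B) = Ide a"
proof -
  have "(A \<circ>\<circ> B) \<circ>\<circ> (A \<circ>\<circ> B) = A \<circ>\<circ> (B \<circ>\<circ> A) \<circ>\<circ> B"
    by (simp add: acomp_assoc)
  also have "\<dots> = A \<circ>\<circ> (A \<circ>\<circ> B) \<circ>\<circ> B"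
    using AB by simp
  also have "\<dots> = (A \<circ>\<circ> A) \<circ>\<circ> (B \<circ>\<circ> B)"
    by (simp add: acomp_assoc)
  also have "\<dots> = Ide a"
    using A B arr_obj[OF A(1)] by (simp add: Ide_acomp)
  finally show ?thesis .
qed

lemma involution_conj_Ide:
  assumes R: "arr R" "src R = b" "trg R = b" "R \<circ>\<circ> R = Ide b"
    and h: "arr h" "src h = b'" "trg h = b" and k: "arr k" "src k = b" "trg k = b'"
    and hk: "h \<circ>\<circ> k = Ide b" and hRh: "h\<^sup>\<star> \<circ>\<circ> R \<circ>\<circ> h = Ide b'"
  shows "R = h \<circ>\<circ> h\<^sup>\<star>"
proof -
  have "(h \<circ>\<circ> h\<^sup>\<star>) \<circ>\<circ> R = h \<circ>\<circ> (h\<^sup>\<star> \<circ>\<circ> R \<circ>\<circ> h) \<circ>\<circ> k"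
    using R h k hk by (simp add: acomp_assoc acomp_Ide)
  then have hhR: "(h \<circ>\<circ> h\<^sup>\<star>) \<circ>\<circ> R = Ide b"
    using hRh h k hk by (simp add: Ide_acomp)
  have "h \<circ>\<circ> h\<^sup>\<star> = (h \<circ>\<circ> h\<^sup>\<star>) \<circ>\<circ> (R \<circ>\<circ> R)"
    using R h by (simp add: acomp_Ide)
  also have "\<dots> = ((h \<circ>\<circ> h\<^sup>\<star>) \<circ>\<circ> R) \<circ>\<circ> R"
    by (simp only: acomp_assoc)
  also have "\<dots> = R"
    using hhR R by (simp add: Ide_acomp)
  finally show ?thesis ..
qed

lemma iso_positive_involution_Ide:
  assumes H: "\<forall>f. f \<in> hom b b \<and> f \<cdot> f = ide b \<and> iso_positive C f b \<longrightarrow> f = ide b"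
    and R: "arr R" "src R = b" "trg R = b" "R \<circ>\<circ> R = Ide b"
    and h: "arr h" "src h = b'" "trg h = b" and k: "arr k" "src k = b" "trg k = b'"
    and hk: "h \<circ>\<circ> k = Ide b" "k \<circ>\<circ> h = Ide b'" and Rh: "R = h \<circ>\<circ> h\<^sup>\<star>"
  shows "R = Ide b"
proof -
  have b: "b \<in> obj" "b' \<in> obj"
    using arr_obj h by auto
  have inv: "h\<^sup>\<star> \<circ>\<circ> k\<^sup>\<star> = Ide b'" "k\<^sup>\<star> \<circ>\<circ> h\<^sup>\<star> = Ide b"
    using hk h k b by (simp_all add: adag_Ide flip: adag_acomp)
  have "R = (h\<^sup>\<star>)\<^sup>\<star> \<circ>\<circ> h\<^sup>\<star>"
    using Rh h by (simp add: adag_adag)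
  then have "iso_positive C (mor R) b"
    using iso_positive_mor_adag_acomp[of "h\<^sup>\<star>" b b' "k\<^sup>\<star>"] h k inv by simp
  moreover have "mor R \<cdot> mor R = ide b"
    using R mor_acomp[of R R] b by simp
  moreover have "mor R \<in> hom b b"
    using arrD[OF R(1)] R(2,3) by simp
  ultimately have "mor R = ide b"
    using H[rule_format, of "mor R"] by blast
  then show ?thesis
    using R b by (intro arr_eqI) auto
qed

lemma parity_unique_arr:
  assumes d1: "duality a b1 e1 c1" and d2: "duality a b2 e2 c2"
    and A: "arr A" "src A = a" "trg A = a" "A \<circ>\<circ> A = Ide a"
    and B: "arr B" "src B = a" "trg B = a" "B \<circ>\<circ> B = Ide a"
    and AB: "A \<circ>\<circ> B = B \<circ>\<circ> A"
    and r1: "Br b1 a \<circ>\<circ> e1\<^sup>\<star> = (B \<box> Ide b1) \<circ>\<circ> c1"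
    and r2: "Br b2 a \<circ>\<circ> e2\<^sup>\<star> = (A \<box> Ide b2) \<circ>\<circ> c2"
    and H: "\<forall>f. f \<in> hom b1 b1 \<and> f \<cdot> f = ide b1 \<and> iso_positive C f b1 \<longrightarrow> f = ide b1"
  shows "A = B"
proof -
  define h where "h = mate b2 a b1 e2 c1"
  define k where "k = mate b1 a b2 e1 c2"
  note hk = duality_comparison[OF d1 d2, folded h_def k_def]
  define T where "T = A \<circ>\<circ> B"
  have T: "arr T" "src T = a" "trg T = a" "T \<circ>\<circ> T = Ide a"
    unfolding T_def using A B commuting_involutions_acomp[OF A B AB] by auto
  define R where "R = duality_transpose a b1 e1 c1 T"
  note R = arr_duality_transpose[OF d1 T(1-3), folded R_def]
  have RR: "R \<circ>\<circ> R = Ide b1"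
    unfolding R_def using duality_transpose_involution[OF d1 T] .
  have "c2 = (Ide a \<box> h\<^sup>\<star>) \<circ>\<circ> (T \<box> Ide b1) \<circ>\<circ> c1"
    unfolding T_def by (rule coev_twist[OF d1 d2 hk(1-3,7) A B(1-3) r1 r2])
  then have "h\<^sup>\<star> \<circ>\<circ> R \<circ>\<circ> h = Ide b2"
    unfolding R_def by (rule duality_transpose_conj[OF d1 d2 hk(1-3,7) T(1-3)])
  then have "R = h \<circ>\<circ> h\<^sup>\<star>"
    using involution_conj_Ide[OF R RR hk(1-6)] hk(9) by blast
  then have "R = Ide b1"
    using iso_positive_involution_Ide[OF H R RR hk(1-6) hk(9,8)] by blast
  then have AB_Ide: "A \<circ>\<circ> B = Ide a"
    using duality_transpose_eq_Ide_imp[OF d1 T(1-3)] unfolding R_def T_def by simp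
  have "A = (A \<circ>\<circ> B) \<circ>\<circ> B"
    using A B by (simp add: acomp_assoc acomp_Ide)
  then show ?thesis
    using AB_Ide B by (simp add: Ide_acomp)
qed

lemma arr_eq_iff: "arr x \<Longrightarrow> arr y \<Longrightarrow> src x = src y \<Longrightarrow> trg x = trg y \<Longrightarrow> x = y \<longleftrightarrow> mor x = mor y"
  using arr_eqI by blast

lemma is_duality_iff_duality:
  assumes "a \<in> obj"
  shows "is_duality C a b e c \<longleftrightarrow> duality a b (Arr (b \<odot> a) e U) (Arr U c (a \<odot> b))"
proof (cases "b \<in> obj \<and> e \<in> hom (b \<odot> a) U \<and> c \<in> hom U (a \<odot> b)")
  case True
  then show ?thesis
    unfolding is_duality_def duality_def zigzag_def mate_def using assms
    by (simp add: arr_eq_iff mor_acomp mor_atens mor_adag)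
next
  case False
  then show ?thesis
    unfolding is_duality_def duality_def by auto
qed

lemma parity_unique:
  assumes d1: "is_duality C a b1 e1 c1" and d2: "is_duality C a b2 e2 c2" and a: "a \<in> obj"
    and A: "A \<in> hom a a" "A \<cdot> A = ide a" and B: "B \<in> hom a a" "B \<cdot> B = ide a"
    and AB: "A \<cdot> B = B \<cdot> A"
    and r1: "brd C b1 a \<cdot> e1\<^sup>\<dagger> = (B \<otimes> ide b1) \<cdot> c1"
    and r2: "brd C b2 a \<cdot> e2\<^sup>\<dagger> = (A \<otimes> ide b2) \<cdot> c2"
    and H: "\<forall>f. f \<in> hom b1 b1 \<and> f \<cdot> f = ide b1 \<and> iso_positive C f b1 \<longrightarrow> f = ide b1"
  shows "A = B"
proof -
  have t1: "b1 \<in> obj" "e1 \<in> hom (b1 \<odot> a) U" "c1 \<in> hom U (a \<odot> b1)"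
    and t2: "b2 \<in> obj" "e2 \<in> hom (b2 \<odot> a) U" "c2 \<in> hom U (a \<odot> b2)"
    using d1 d2 unfolding is_duality_def by auto
  have "Arr a A a = Arr a B a"
  proof (rule parity_unique_arr[OF _ _ _ _ _ _ _ _ _ _ _ _ _ H])
    show "duality a b1 (Arr (b1 \<odot> a) e1 U) (Arr U c1 (a \<odot> b1))"
      and "duality a b2 (Arr (b2 \<odot> a) e2 U) (Arr U c2 (a \<odot> b2))"
      using d1 d2 a by (simp_all add: is_duality_iff_duality)
    show "Arr a A a \<circ>\<circ> Arr a A a = Ide a" "Arr a B a \<circ>\<circ> Arr a B a = Ide a"
      "Arr a A a \<circ>\<circ> Arr a B a = Arr a B a \<circ>\<circ> Arr a A a"
      using A B AB by (simp_all add: acomp_Arr Ide_def)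
    show "Br b1 a \<circ>\<circ> (Arr (b1 \<odot> a) e1 U)\<^sup>\<star> = (Arr a B a \<box> Ide b1) \<circ>\<circ> Arr U c1 (a \<odot> b1)"
      and "Br b2 a \<circ>\<circ> (Arr (b2 \<odot> a) e2 U)\<^sup>\<star> = (Arr a A a \<box> Ide b2) \<circ>\<circ> Arr U c2 (a \<odot> b2)"
      using a t1 t2 A B r1 r2 by (simp_all add: Br_def Ide_def adag_Arr atens_Arr acomp_Arr
          tnm_in_hom brd_in_hom dag_in_hom ide_in_hom)
  qed (use a A B in auto)
  then show ?thesis
    using A B by (metis mor_Arr)
qed

end

section \<open>Symmetric monoidal dagger functors\<close>

lemma BZ2_par_in_hom:
  "is_BZ2_action C \<Longrightarrow> a \<in> Obj C \<Longrightarrow> par C a \<in> Hom C a a"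
  and BZ2_par_involution:
  "is_BZ2_action C \<Longrightarrow> a \<in> Obj C \<Longrightarrow> cmp C (par C a) (par C a) = idm C a"
  and BZ2_par_natural:
  "is_BZ2_action C \<Longrightarrow> f \<in> Hom C a b \<Longrightarrow> cmp C (par C b) f = cmp C f (par C a)"
  unfolding is_BZ2_action_def by blast+

locale sm_dagger_functor = C1: sm_dagger D1 + C2: sm_dagger D2
  for D1 :: "('o, 'm, 'x) dcat_scheme" and D2 :: "('p, 'n, 'y) dcat_scheme" +
  fixes Fo :: "'o \<Rightarrow> 'p" and Fm :: "'m \<Rightarrow> 'n" and mu :: "'o \<Rightarrow> 'o \<Rightarrow> 'n" and eps :: 'n
  assumes sm_dagger_functor: "is_sym_monoidal_dagger_functor D1 D2 Fo Fm mu eps"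
begin

abbreviation acomp2 (infixr "\<diamond>" 55) where "x \<diamond> y \<equiv> C2.acomp x y"
abbreviation atens2 (infixr "\<oslash>" 60) where "x \<oslash> y \<equiv> C2.atens x y"
abbreviation adag2 ("_\<^sup>\<ddagger>" [1000] 999) where "x\<^sup>\<ddagger> \<equiv> C2.adag x"
abbreviation tno1 (infixr "\<odot>\<^sub>1" 60) where "a \<odot>\<^sub>1 b \<equiv> tno D1 a b"
abbreviation tno2 (infixr "\<odot>\<^sub>2" 60) where "a \<odot>\<^sub>2 b \<equiv> tno D2 a b"
abbreviation U1 where "U1 \<equiv> unt D1"
abbreviation U2 where "U2 \<equiv> unt D2"

lemmas functor_axioms = sm_dagger_functor[unfolded is_sym_monoidal_dagger_functor_def]

lemma F_obj [rule_format, simp]: "\<forall>a \<in> Obj D1. Fo a \<in> Obj D2"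
  using functor_axioms by (elim conjE) assumption
lemma F_hom [rule_format]: "\<forall>a b f. f \<in> Hom D1 a b \<longrightarrow> Fm f \<in> Hom D2 (Fo a) (Fo b)"
  using functor_axioms by (elim conjE) assumption
lemma F_cmp [rule_format]: "\<forall>a b c f g. f \<in> Hom D1 a b \<longrightarrow> g \<in> Hom D1 b c \<longrightarrow>
    Fm (cmp D1 g f) = cmp D2 (Fm g) (Fm f)"
  using functor_axioms by (elim conjE) assumption
lemma F_ide [rule_format]: "\<forall>a \<in> Obj D1. Fm (idm D1 a) = idm D2 (Fo a)"
  using functor_axioms by (elim conjE) assumption
lemma F_dag [rule_format]: "\<forall>a b f. f \<in> Hom D1 a b \<longrightarrow> Fm (dag D1 f) = dag D2 (Fm f)"
  using functor_axioms by (elim conjE) assumption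
lemma mu_unitary [rule_format]: "\<forall>a \<in> Obj D1. \<forall>b \<in> Obj D1.
    unitary D2 (mu a b) (Fo a \<odot>\<^sub>2 Fo b) (Fo (a \<odot>\<^sub>1 b))"
  using functor_axioms by (elim conjE) assumption
lemma eps_unitary: "unitary D2 eps U2 (Fo U1)"
  using functor_axioms by (elim conjE) assumption
lemma mu_natural [rule_format]: "\<forall>a b c d f g. f \<in> Hom D1 a b \<longrightarrow> g \<in> Hom D1 c d \<longrightarrow>
    cmp D2 (mu b d) (tnm D2 (Fm f) (Fm g)) = cmp D2 (Fm (tnm D1 f g)) (mu a c)"
  using functor_axioms by (elim conjE) assumption
lemma mu_asc [rule_format]: "\<forall>a \<in> Obj D1. \<forall>b \<in> Obj D1. \<forall>c \<in> Obj D1.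
    cmp D2 (Fm (asc D1 a b c)) (cmp D2 (mu (a \<odot>\<^sub>1 b) c) (tnm D2 (mu a b) (idm D2 (Fo c)))) =
    cmp D2 (mu a (b \<odot>\<^sub>1 c)) (cmp D2 (tnm D2 (idm D2 (Fo a)) (mu b c)) (asc D2 (Fo a) (Fo b) (Fo c)))"
  using functor_axioms by (elim conjE) assumption
lemma mu_lun [rule_format]: "\<forall>a \<in> Obj D1.
    lun D2 (Fo a) = cmp D2 (Fm (lun D1 a)) (cmp D2 (mu U1 a) (tnm D2 eps (idm D2 (Fo a))))"
  using functor_axioms by (elim conjE) assumption
lemma mu_run [rule_format]: "\<forall>a \<in> Obj D1.
    run D2 (Fo a) = cmp D2 (Fm (run D1 a)) (cmp D2 (mu a U1) (tnm D2 (idm D2 (Fo a)) eps))"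
  using functor_axioms by (elim conjE) assumption
lemma mu_brd [rule_format]: "\<forall>a \<in> Obj D1. \<forall>b \<in> Obj D1.
    cmp D2 (Fm (brd D1 a b)) (mu a b) = cmp D2 (mu b a) (brd D2 (Fo a) (Fo b))"
  using functor_axioms by (elim conjE) assumption

lemma mu_in_hom: "a \<in> Obj D1 \<Longrightarrow> b \<in> Obj D1 \<Longrightarrow> mu a b \<in> Hom D2 (Fo a \<odot>\<^sub>2 Fo b) (Fo (a \<odot>\<^sub>1 b))"
  using mu_unitary[of a b] unfolding unitary_def by blast
lemma eps_in_hom: "eps \<in> Hom D2 U2 (Fo U1)"
  using eps_unitary unfolding unitary_def by blast

lemma F_unitary:
  assumes "unitary D1 f a b"
  shows "unitary D2 (Fm f) (Fo a) (Fo b)"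
proof -
  have f: "f \<in> Hom D1 a b" "cmp D1 (dag D1 f) f = idm D1 a" "cmp D1 f (dag D1 f) = idm D1 b"
    using assms unfolding unitary_def by auto
  then have "a \<in> Obj D1" "b \<in> Obj D1"
    using C1.hom_obj by auto
  then show ?thesis
    unfolding unitary_def using f F_hom F_cmp[of _ a b "dag D1 f" a] F_cmp[of _ b a f b]
    by (metis C1.dag_in_hom F_dag F_ide)
qed

definition FArr where "FArr a f b = C2.Arr (Fo a) (Fm f) (Fo b)"
definition Mu where "Mu a b = C2.Arr (Fo a \<odot>\<^sub>2 Fo b) (mu a b) (Fo (a \<odot>\<^sub>1 b))"
definition Eps where "Eps = C2.Arr U2 eps (Fo U1)"

lemma arr_FArr [simp]: "f \<in> Hom D1 a b \<Longrightarrow> C2.arr (FArr a f b)"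
  and src_FArr [simp]: "f \<in> Hom D1 a b \<Longrightarrow> src (FArr a f b) = Fo a"
  and trg_FArr [simp]: "f \<in> Hom D1 a b \<Longrightarrow> trg (FArr a f b) = Fo b"
  and mor_FArr [simp]: "f \<in> Hom D1 a b \<Longrightarrow> mor (FArr a f b) = Fm f"
  unfolding FArr_def using F_hom by simp_all
lemma arr_Mu [simp]: "a \<in> Obj D1 \<Longrightarrow> b \<in> Obj D1 \<Longrightarrow> C2.arr (Mu a b)"
  and src_Mu [simp]: "a \<in> Obj D1 \<Longrightarrow> b \<in> Obj D1 \<Longrightarrow> src (Mu a b) = Fo a \<odot>\<^sub>2 Fo b"
  and trg_Mu [simp]: "a \<in> Obj D1 \<Longrightarrow> b \<in> Obj D1 \<Longrightarrow> trg (Mu a b) = Fo (a \<odot>\<^sub>1 b)"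
  and mor_Mu [simp]: "a \<in> Obj D1 \<Longrightarrow> b \<in> Obj D1 \<Longrightarrow> mor (Mu a b) = mu a b"
  unfolding Mu_def using mu_in_hom by simp_all
lemma arr_Eps [simp]: "C2.arr Eps"
  and src_Eps [simp]: "src Eps = U2"
  and trg_Eps [simp]: "trg Eps = Fo U1"
  and mor_Eps [simp]: "mor Eps = eps"
  unfolding Eps_def using eps_in_hom by simp_all

lemma unitary_FArr: "unitary D1 f a b \<Longrightarrow> C2.unitary_arr (FArr a f b)"
  unfolding FArr_def by (intro C2.unitary_arr_Arr F_unitary)
lemma unitary_Mu: "a \<in> Obj D1 \<Longrightarrow> b \<in> Obj D1 \<Longrightarrow> C2.unitary_arr (Mu a b)"
  unfolding Mu_def by (intro C2.unitary_arr_Arr mu_unitary)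
lemma unitary_Eps: "C2.unitary_arr Eps"
  unfolding Eps_def by (intro C2.unitary_arr_Arr eps_unitary)

lemmas D1_in_hom = C1.ide_in_hom C1.cmp_in_hom C1.dag_in_hom C1.tnm_in_hom C1.asc_in_hom
  C1.lun_in_hom C1.run_in_hom C1.brd_in_hom C1.unt_obj C1.tno_obj
lemmas mor_simps = C2.mor_acomp C2.mor_atens C2.mor_adag

lemma FArr_cmp: "f \<in> Hom D1 a b \<Longrightarrow> g \<in> Hom D1 b c \<Longrightarrow> FArr a (cmp D1 g f) c = FArr b g c \<diamond> FArr a f b"
  using C1.cmp_in_hom[of f a b g c] by (intro C2.arr_eqI) (simp_all add: mor_simps F_cmp)
lemma FArr_ide: "a \<in> Obj D1 \<Longrightarrow> FArr a (idm D1 a) a = C2.Ide (Fo a)"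
  using C1.ide_in_hom[of a] by (intro C2.arr_eqI) (simp_all add: F_ide)
lemma FArr_dag: "f \<in> Hom D1 a b \<Longrightarrow> FArr b (dag D1 f) a = (FArr a f b)\<^sup>\<ddagger>"
  using C1.dag_in_hom[of f a b] by (intro C2.arr_eqI) (simp_all add: mor_simps F_dag)
lemma Mu_natural: "f \<in> Hom D1 a b \<Longrightarrow> g \<in> Hom D1 c d \<Longrightarrow>
    Mu b d \<diamond> (FArr a f b \<oslash> FArr c g d) = FArr (a \<odot>\<^sub>1 c) (tnm D1 f g) (b \<odot>\<^sub>1 d) \<diamond> Mu a c"
  using C1.tnm_in_hom[of f a b g c d] C1.hom_obj[of f a b] C1.hom_obj[of g c d]
  by (intro C2.arr_eqI) (simp_all add: mor_simps mu_natural)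
lemma Mu_asc: "a \<in> Obj D1 \<Longrightarrow> b \<in> Obj D1 \<Longrightarrow> c \<in> Obj D1 \<Longrightarrow>
    FArr ((a \<odot>\<^sub>1 b) \<odot>\<^sub>1 c) (asc D1 a b c) (a \<odot>\<^sub>1 (b \<odot>\<^sub>1 c)) \<diamond> Mu (a \<odot>\<^sub>1 b) c \<diamond> (Mu a b \<oslash> C2.Ide (Fo c))
      = Mu a (b \<odot>\<^sub>1 c) \<diamond> (C2.Ide (Fo a) \<oslash> Mu b c) \<diamond> C2.As (Fo a) (Fo b) (Fo c)"
  using C1.asc_in_hom[of a b c] by (intro C2.arr_eqI) (simp_all add: mor_simps mu_asc)
lemma Lu_image: "a \<in> Obj D1 \<Longrightarrow> C2.Lu (Fo a)
    = FArr (U1 \<odot>\<^sub>1 a) (lun D1 a) a \<diamond> Mu U1 a \<diamond> (Eps \<oslash> C2.Ide (Fo a))"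
  using C1.lun_in_hom[of a] by (intro C2.arr_eqI) (simp_all add: mor_simps mu_lun)
lemma Ru_image: "a \<in> Obj D1 \<Longrightarrow> C2.Ru (Fo a)
    = FArr (a \<odot>\<^sub>1 U1) (run D1 a) a \<diamond> Mu a U1 \<diamond> (C2.Ide (Fo a) \<oslash> Eps)"
  using C1.run_in_hom[of a] by (intro C2.arr_eqI) (simp_all add: mor_simps mu_run)
lemma Mu_brd: "a \<in> Obj D1 \<Longrightarrow> b \<in> Obj D1 \<Longrightarrow>
    FArr (a \<odot>\<^sub>1 b) (brd D1 a b) (b \<odot>\<^sub>1 a) \<diamond> Mu a b = Mu b a \<diamond> C2.Br (Fo a) (Fo b)"
  using C1.brd_in_hom[of a b] by (intro C2.arr_eqI) (simp_all add: mor_simps mu_brd)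

lemma Mu_asc_inv:
  assumes o: "a \<in> Obj D1" "b \<in> Obj D1" "c \<in> Obj D1"
  shows "Mu (a \<odot>\<^sub>1 b) c \<diamond> (Mu a b \<oslash> C2.Ide (Fo c)) \<diamond> (C2.As (Fo a) (Fo b) (Fo c))\<^sup>\<ddagger>
      \<diamond> (C2.Ide (Fo a) \<oslash> (Mu b c)\<^sup>\<ddagger>)
    = FArr (a \<odot>\<^sub>1 (b \<odot>\<^sub>1 c)) (dag D1 (asc D1 a b c)) ((a \<odot>\<^sub>1 b) \<odot>\<^sub>1 c) \<diamond> Mu a (b \<odot>\<^sub>1 c)"
proof -
  let ?F = "FArr ((a \<odot>\<^sub>1 b) \<odot>\<^sub>1 c) (asc D1 a b c) (a \<odot>\<^sub>1 (b \<odot>\<^sub>1 c))"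
  have uF: "C2.unitary_arr ?F"
    using unitary_FArr C1.asc_unitary o by blast
  have tA: "asc D1 a b c \<in> Hom D1 ((a \<odot>\<^sub>1 b) \<odot>\<^sub>1 c) (a \<odot>\<^sub>1 (b \<odot>\<^sub>1 c))"
    using o by (simp add: C1.asc_in_hom)
  have "Mu (a \<odot>\<^sub>1 b) c \<diamond> (Mu a b \<oslash> C2.Ide (Fo c)) \<diamond> (C2.As (Fo a) (Fo b) (Fo c))\<^sup>\<ddagger>
       \<diamond> (C2.Ide (Fo a) \<oslash> (Mu b c)\<^sup>\<ddagger>)
     = ?F\<^sup>\<ddagger> \<diamond> ?F \<diamond> Mu (a \<odot>\<^sub>1 b) c \<diamond> (Mu a b \<oslash> C2.Ide (Fo c)) \<diamond> (C2.As (Fo a) (Fo b) (Fo c))\<^sup>\<ddagger>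
       \<diamond> (C2.Ide (Fo a) \<oslash> (Mu b c)\<^sup>\<ddagger>)"
    using C2.unitary_cancel[of "?F\<^sup>\<ddagger>"] uF o tA by (simp add: C2.unitary_arr_intros C2.adag_adag)
  also have "\<dots> = ?F\<^sup>\<ddagger> \<diamond> Mu a (b \<odot>\<^sub>1 c) \<diamond> (C2.Ide (Fo a) \<oslash> Mu b c) \<diamond> C2.As (Fo a) (Fo b) (Fo c)
     \<diamond> (C2.As (Fo a) (Fo b) (Fo c))\<^sup>\<ddagger> \<diamond> (C2.Ide (Fo a) \<oslash> (Mu b c)\<^sup>\<ddagger>)"
    using C2.acomp_rewrite3[OF Mu_asc[of a b c]] o by (simp only: C2.acomp_assoc)
  also have "\<dots> = ?F\<^sup>\<ddagger> \<diamond> Mu a (b \<odot>\<^sub>1 c) \<diamond> (C2.Ide (Fo a) \<oslash> Mu b c) \<diamond> (C2.Ide (Fo a) \<oslash> (Mu b c)\<^sup>\<ddagger>)"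
    using o unitary_Mu by (simp add: C2.unitary_cancel C2.unitary_arr_intros)
  also have "\<dots> = ?F\<^sup>\<ddagger> \<diamond> Mu a (b \<odot>\<^sub>1 c)"
    using o unitary_Mu tA by (simp add: C2.unitary_arr_Ide_atens_inv C2.acomp_Ide)
  finally show ?thesis
    using tA by (simp add: FArr_dag)
qed

section \<open>Images of dualities\<close>

lemma Mu_natural_Ide_left: "a \<in> Obj D1 \<Longrightarrow> f \<in> Hom D1 b b' \<Longrightarrow>
    Mu a b' \<diamond> (C2.Ide (Fo a) \<oslash> FArr b f b')
      = FArr (a \<odot>\<^sub>1 b) (tnm D1 (idm D1 a) f) (a \<odot>\<^sub>1 b') \<diamond> Mu a b"
  using Mu_natural[of "idm D1 a" a a f b b'] by (simp add: FArr_ide C1.ide_in_hom)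
lemma Mu_natural_Ide_right: "f \<in> Hom D1 a a' \<Longrightarrow> b \<in> Obj D1 \<Longrightarrow>
    Mu a' b \<diamond> (FArr a f a' \<oslash> C2.Ide (Fo b))
      = FArr (a \<odot>\<^sub>1 b) (tnm D1 f (idm D1 b)) (a' \<odot>\<^sub>1 b) \<diamond> Mu a b"
  using Mu_natural[of f a a' "idm D1 b" b b] by (simp add: FArr_ide C1.ide_in_hom)

lemma FArr_cmp5:
  assumes "f0 \<in> Hom D1 a0 a1" "f1 \<in> Hom D1 a1 a2" "f2 \<in> Hom D1 a2 a3" "f3 \<in> Hom D1 a3 a4"
    "f4 \<in> Hom D1 a4 a5"
  shows "FArr a0 (cmp D1 f4 (cmp D1 f3 (cmp D1 f2 (cmp D1 f1 f0)))) a5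
    = FArr a4 f4 a5 \<diamond> FArr a3 f3 a4 \<diamond> FArr a2 f2 a3 \<diamond> FArr a1 f1 a2 \<diamond> FArr a0 f0 a1"
proof -
  have h: "cmp D1 f1 f0 \<in> Hom D1 a0 a2" "cmp D1 f2 (cmp D1 f1 f0) \<in> Hom D1 a0 a3"
    "cmp D1 f3 (cmp D1 f2 (cmp D1 f1 f0)) \<in> Hom D1 a0 a4"
    using assms by (auto intro: C1.cmp_in_hom)
  show ?thesis
    by (simp add: FArr_cmp[OF h(3) assms(5)] FArr_cmp[OF h(2) assms(4)] FArr_cmp[OF h(1) assms(3)]
        FArr_cmp[OF assms(1,2)] C2.acomp_assoc)
qed

definition Fev :: "'o \<Rightarrow> 'o \<Rightarrow> 'm \<Rightarrow> ('p, 'n) arrow" where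
  "Fev xs x ev = Eps\<^sup>\<ddagger> \<diamond> FArr (xs \<odot>\<^sub>1 x) ev U1 \<diamond> Mu xs x"
definition Fcoev :: "'o \<Rightarrow> 'o \<Rightarrow> 'm \<Rightarrow> ('p, 'n) arrow" where
  "Fcoev x xs coev = (Mu x xs)\<^sup>\<ddagger> \<diamond> FArr U1 coev (x \<odot>\<^sub>1 xs) \<diamond> Eps"

lemma zigzag_image_expand:
  assumes x: "x \<in> Obj D1" and xs: "xs \<in> Obj D1"
    and ev: "ev \<in> Hom D1 (xs \<odot>\<^sub>1 x) U1" and coev: "coev \<in> Hom D1 U1 (x \<odot>\<^sub>1 xs)"
  shows "C2.zigzag (Fo x) (Fo xs) (Fev xs x ev) (Fcoev x xs coev)
    = FArr (x \<odot>\<^sub>1 U1) (run D1 x) x \<diamond> Mu x U1 \<diamond> (C2.Ide (Fo x) \<oslash> FArr (xs \<odot>\<^sub>1 x) ev U1)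
      \<diamond> (C2.Ide (Fo x) \<oslash> Mu xs x) \<diamond> C2.As (Fo x) (Fo xs) (Fo x) \<diamond> ((Mu x xs)\<^sup>\<ddagger> \<oslash> C2.Ide (Fo x))
      \<diamond> (FArr U1 coev (x \<odot>\<^sub>1 xs) \<oslash> C2.Ide (Fo x)) \<diamond> (Mu U1 x)\<^sup>\<ddagger> \<diamond> (FArr (U1 \<odot>\<^sub>1 x) (lun D1 x) x)\<^sup>\<ddagger>"
proof -
  let ?a = "Fo x" and ?b = "Fo xs"
  have "C2.zigzag ?a ?b (Fev xs x ev) (Fcoev x xs coev)
    = FArr (x \<odot>\<^sub>1 U1) (run D1 x) x \<diamond> Mu x U1 \<diamond> (C2.Ide ?a \<oslash> Eps) \<diamond> (C2.Ide ?a \<oslash> Eps\<^sup>\<ddagger>)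
      \<diamond> (C2.Ide ?a \<oslash> FArr (xs \<odot>\<^sub>1 x) ev U1) \<diamond> (C2.Ide ?a \<oslash> Mu xs x) \<diamond> C2.As ?a ?b ?a
      \<diamond> ((Mu x xs)\<^sup>\<ddagger> \<oslash> C2.Ide ?a) \<diamond> (FArr U1 coev (x \<odot>\<^sub>1 xs) \<oslash> C2.Ide ?a) \<diamond> (Eps \<oslash> C2.Ide ?a)
      \<diamond> (Eps\<^sup>\<ddagger> \<oslash> C2.Ide ?a) \<diamond> (Mu U1 x)\<^sup>\<ddagger> \<diamond> (FArr (U1 \<odot>\<^sub>1 x) (lun D1 x) x)\<^sup>\<ddagger>"
    unfolding C2.zigzag_def Fev_def Fcoev_def using x xs ev coev
    by (simp add: Ru_image Lu_image C2.adag_acomp C2.adag_atens C2.adag_Ide C2.interchange_Ide_left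
        C2.interchange_Ide_right C2.acomp_assoc D1_in_hom)
  also have "\<dots> = FArr (x \<odot>\<^sub>1 U1) (run D1 x) x \<diamond> Mu x U1 \<diamond> (C2.Ide ?a \<oslash> FArr (xs \<odot>\<^sub>1 x) ev U1)
      \<diamond> (C2.Ide ?a \<oslash> Mu xs x) \<diamond> C2.As ?a ?b ?a \<diamond> ((Mu x xs)\<^sup>\<ddagger> \<oslash> C2.Ide ?a)
      \<diamond> (FArr U1 coev (x \<odot>\<^sub>1 xs) \<oslash> C2.Ide ?a) \<diamond> (Mu U1 x)\<^sup>\<ddagger> \<diamond> (FArr (U1 \<odot>\<^sub>1 x) (lun D1 x) x)\<^sup>\<ddagger>"
    using x xs ev coev unitary_Eps
    by (simp add: C2.unitary_cancel_left C2.unitary_cancel_right D1_in_hom)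
  finally show ?thesis .
qed

lemma zigzag_image:
  assumes x: "x \<in> Obj D1" and xs: "xs \<in> Obj D1"
    and ev: "ev \<in> Hom D1 (xs \<odot>\<^sub>1 x) U1" and coev: "coev \<in> Hom D1 U1 (x \<odot>\<^sub>1 xs)"
  shows "C2.zigzag (Fo x) (Fo xs) (Fev xs x ev) (Fcoev x xs coev)
    = FArr x (cmp D1 (run D1 x) (cmp D1 (tnm D1 (idm D1 x) ev) (cmp D1 (asc D1 x xs x)
        (cmp D1 (tnm D1 coev (idm D1 x)) (dag D1 (lun D1 x)))))) x"
proof -
  let ?a = "Fo x" and ?b = "Fo xs"
  let ?run = "FArr (x \<odot>\<^sub>1 U1) (run D1 x) x"
    and ?ev = "FArr (x \<odot>\<^sub>1 (xs \<odot>\<^sub>1 x)) (tnm D1 (idm D1 x) ev) (x \<odot>\<^sub>1 U1)"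
    and ?asc = "FArr ((x \<odot>\<^sub>1 xs) \<odot>\<^sub>1 x) (asc D1 x xs x) (x \<odot>\<^sub>1 (xs \<odot>\<^sub>1 x))"
    and ?coev = "FArr (U1 \<odot>\<^sub>1 x) (tnm D1 coev (idm D1 x)) ((x \<odot>\<^sub>1 xs) \<odot>\<^sub>1 x)"
    and ?lun = "FArr x (dag D1 (lun D1 x)) (U1 \<odot>\<^sub>1 x)"
  have t: "idm D1 x \<in> Hom D1 x x" "tnm D1 (idm D1 x) ev \<in> Hom D1 (x \<odot>\<^sub>1 (xs \<odot>\<^sub>1 x)) (x \<odot>\<^sub>1 U1)"
    "tnm D1 coev (idm D1 x) \<in> Hom D1 (U1 \<odot>\<^sub>1 x) ((x \<odot>\<^sub>1 xs) \<odot>\<^sub>1 x)"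
    using x xs ev coev by (auto intro: D1_in_hom)
  have "C2.zigzag ?a ?b (Fev xs x ev) (Fcoev x xs coev)
    = ?run \<diamond> ?ev \<diamond> Mu x (xs \<odot>\<^sub>1 x) \<diamond> (C2.Ide ?a \<oslash> Mu xs x) \<diamond> C2.As ?a ?b ?a
      \<diamond> ((Mu x xs)\<^sup>\<ddagger> \<oslash> C2.Ide ?a) \<diamond> (FArr U1 coev (x \<odot>\<^sub>1 xs) \<oslash> C2.Ide ?a) \<diamond> (Mu U1 x)\<^sup>\<ddagger>
      \<diamond> (FArr (U1 \<odot>\<^sub>1 x) (lun D1 x) x)\<^sup>\<ddagger>"
    unfolding zigzag_image_expand[OF assms]
    using C2.acomp_rewrite[OF Mu_natural_Ide_left[OF x ev]] by (simp only: C2.acomp_assoc)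
  also have "\<dots> = ?run \<diamond> ?ev \<diamond> ?asc \<diamond> Mu (x \<odot>\<^sub>1 xs) x \<diamond> (Mu x xs \<oslash> C2.Ide ?a)
      \<diamond> ((Mu x xs)\<^sup>\<ddagger> \<oslash> C2.Ide ?a) \<diamond> (FArr U1 coev (x \<odot>\<^sub>1 xs) \<oslash> C2.Ide ?a) \<diamond> (Mu U1 x)\<^sup>\<ddagger>
      \<diamond> (FArr (U1 \<odot>\<^sub>1 x) (lun D1 x) x)\<^sup>\<ddagger>"
    using C2.acomp_rewrite3[OF Mu_asc[of x xs x, symmetric]] x xs by (simp only: C2.acomp_assoc)
  also have "\<dots> = ?run \<diamond> ?ev \<diamond> ?asc \<diamond> Mu (x \<odot>\<^sub>1 xs) x \<diamond> (FArr U1 coev (x \<odot>\<^sub>1 xs) \<oslash> C2.Ide ?a)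
      \<diamond> (Mu U1 x)\<^sup>\<ddagger> \<diamond> (FArr (U1 \<odot>\<^sub>1 x) (lun D1 x) x)\<^sup>\<ddagger>"
    using x xs coev unitary_Mu by (simp add: C2.unitary_cancel_right D1_in_hom)
  also have "\<dots> = ?run \<diamond> ?ev \<diamond> ?asc \<diamond> ?coev \<diamond> Mu U1 x \<diamond> (Mu U1 x)\<^sup>\<ddagger> \<diamond> (FArr (U1 \<odot>\<^sub>1 x) (lun D1 x) x)\<^sup>\<ddagger>"
    using C2.acomp_rewrite[OF Mu_natural_Ide_right[OF coev x]] by (simp only: C2.acomp_assoc)
  also have "\<dots> = ?run \<diamond> ?ev \<diamond> ?asc \<diamond> ?coev \<diamond> ?lun"
    using x xs coev unitary_Mu by (simp add: C2.unitary_cancel FArr_dag D1_in_hom)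
  also have "\<dots> = FArr x (cmp D1 (run D1 x) (cmp D1 (tnm D1 (idm D1 x) ev) (cmp D1 (asc D1 x xs x)
        (cmp D1 (tnm D1 coev (idm D1 x)) (dag D1 (lun D1 x)))))) x"
    using x xs t by (intro FArr_cmp5[symmetric]) (auto intro: D1_in_hom)
  finally show ?thesis .
qed

lemma mate_image_expand:
  assumes x: "x \<in> Obj D1" and xs: "xs \<in> Obj D1"
    and ev: "ev \<in> Hom D1 (xs \<odot>\<^sub>1 x) U1" and coev: "coev \<in> Hom D1 U1 (x \<odot>\<^sub>1 xs)"
  shows "C2.mate (Fo xs) (Fo x) (Fo xs) (Fev xs x ev) (Fcoev x xs coev)
    = FArr (U1 \<odot>\<^sub>1 xs) (lun D1 xs) xs \<diamond> Mu U1 xs \<diamond> (FArr (xs \<odot>\<^sub>1 x) ev U1 \<oslash> C2.Ide (Fo xs))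
      \<diamond> (Mu xs x \<oslash> C2.Ide (Fo xs)) \<diamond> (C2.As (Fo xs) (Fo x) (Fo xs))\<^sup>\<ddagger> \<diamond> (C2.Ide (Fo xs) \<oslash> (Mu x xs)\<^sup>\<ddagger>)
      \<diamond> (C2.Ide (Fo xs) \<oslash> FArr U1 coev (x \<odot>\<^sub>1 xs)) \<diamond> (Mu xs U1)\<^sup>\<ddagger> \<diamond> (FArr (xs \<odot>\<^sub>1 U1) (run D1 xs) xs)\<^sup>\<ddagger>"
proof -
  let ?a = "Fo x" and ?b = "Fo xs"
  have "C2.mate ?b ?a ?b (Fev xs x ev) (Fcoev x xs coev)
    = FArr (U1 \<odot>\<^sub>1 xs) (lun D1 xs) xs \<diamond> Mu U1 xs \<diamond> (Eps \<oslash> C2.Ide ?b) \<diamond> (Eps\<^sup>\<ddagger> \<oslash> C2.Ide ?b)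
      \<diamond> (FArr (xs \<odot>\<^sub>1 x) ev U1 \<oslash> C2.Ide ?b) \<diamond> (Mu xs x \<oslash> C2.Ide ?b) \<diamond> (C2.As ?b ?a ?b)\<^sup>\<ddagger>
      \<diamond> (C2.Ide ?b \<oslash> (Mu x xs)\<^sup>\<ddagger>) \<diamond> (C2.Ide ?b \<oslash> FArr U1 coev (x \<odot>\<^sub>1 xs)) \<diamond> (C2.Ide ?b \<oslash> Eps)
      \<diamond> (C2.Ide ?b \<oslash> Eps\<^sup>\<ddagger>) \<diamond> (Mu xs U1)\<^sup>\<ddagger> \<diamond> (FArr (xs \<odot>\<^sub>1 U1) (run D1 xs) xs)\<^sup>\<ddagger>"
    unfolding C2.mate_def Fev_def Fcoev_def using x xs ev coev
    by (simp add: Ru_image Lu_image C2.adag_acomp C2.adag_atens C2.adag_Ide C2.interchange_Ide_left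
        C2.interchange_Ide_right C2.acomp_assoc D1_in_hom)
  also have "\<dots> = FArr (U1 \<odot>\<^sub>1 xs) (lun D1 xs) xs \<diamond> Mu U1 xs \<diamond> (FArr (xs \<odot>\<^sub>1 x) ev U1 \<oslash> C2.Ide ?b)
      \<diamond> (Mu xs x \<oslash> C2.Ide ?b) \<diamond> (C2.As ?b ?a ?b)\<^sup>\<ddagger> \<diamond> (C2.Ide ?b \<oslash> (Mu x xs)\<^sup>\<ddagger>)
      \<diamond> (C2.Ide ?b \<oslash> FArr U1 coev (x \<odot>\<^sub>1 xs)) \<diamond> (Mu xs U1)\<^sup>\<ddagger> \<diamond> (FArr (xs \<odot>\<^sub>1 U1) (run D1 xs) xs)\<^sup>\<ddagger>"
    using x xs ev coev unitary_Eps
    by (simp add: C2.unitary_cancel_left C2.unitary_cancel_right D1_in_hom)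
  finally show ?thesis .
qed

lemma mate_image:
  assumes x: "x \<in> Obj D1" and xs: "xs \<in> Obj D1"
    and ev: "ev \<in> Hom D1 (xs \<odot>\<^sub>1 x) U1" and coev: "coev \<in> Hom D1 U1 (x \<odot>\<^sub>1 xs)"
  shows "C2.mate (Fo xs) (Fo x) (Fo xs) (Fev xs x ev) (Fcoev x xs coev)
    = FArr xs (cmp D1 (lun D1 xs) (cmp D1 (tnm D1 ev (idm D1 xs)) (cmp D1 (dag D1 (asc D1 xs x xs))
        (cmp D1 (tnm D1 (idm D1 xs) coev) (dag D1 (run D1 xs)))))) xs"
proof -
  let ?a = "Fo x" and ?b = "Fo xs"
  let ?lun = "FArr (U1 \<odot>\<^sub>1 xs) (lun D1 xs) xs"
    and ?ev = "FArr ((xs \<odot>\<^sub>1 x) \<odot>\<^sub>1 xs) (tnm D1 ev (idm D1 xs)) (U1 \<odot>\<^sub>1 xs)"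
    and ?asc = "FArr (xs \<odot>\<^sub>1 (x \<odot>\<^sub>1 xs)) (dag D1 (asc D1 xs x xs)) ((xs \<odot>\<^sub>1 x) \<odot>\<^sub>1 xs)"
    and ?coev = "FArr (xs \<odot>\<^sub>1 U1) (tnm D1 (idm D1 xs) coev) (xs \<odot>\<^sub>1 (x \<odot>\<^sub>1 xs))"
    and ?run = "FArr xs (dag D1 (run D1 xs)) (xs \<odot>\<^sub>1 U1)"
  have t: "idm D1 xs \<in> Hom D1 xs xs" "tnm D1 ev (idm D1 xs) \<in> Hom D1 ((xs \<odot>\<^sub>1 x) \<odot>\<^sub>1 xs) (U1 \<odot>\<^sub>1 xs)"
    "tnm D1 (idm D1 xs) coev \<in> Hom D1 (xs \<odot>\<^sub>1 U1) (xs \<odot>\<^sub>1 (x \<odot>\<^sub>1 xs))"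
    using x xs ev coev by (auto intro: D1_in_hom)
  have "C2.mate ?b ?a ?b (Fev xs x ev) (Fcoev x xs coev)
    = ?lun \<diamond> ?ev \<diamond> Mu (xs \<odot>\<^sub>1 x) xs \<diamond> (Mu xs x \<oslash> C2.Ide ?b) \<diamond> (C2.As ?b ?a ?b)\<^sup>\<ddagger>
      \<diamond> (C2.Ide ?b \<oslash> (Mu x xs)\<^sup>\<ddagger>) \<diamond> (C2.Ide ?b \<oslash> FArr U1 coev (x \<odot>\<^sub>1 xs)) \<diamond> (Mu xs U1)\<^sup>\<ddagger>
      \<diamond> (FArr (xs \<odot>\<^sub>1 U1) (run D1 xs) xs)\<^sup>\<ddagger>"
    unfolding mate_image_expand[OF assms]
    using C2.acomp_rewrite[OF Mu_natural_Ide_right[OF ev xs]] by (simp only: C2.acomp_assoc)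
  also have "\<dots> = ?lun \<diamond> ?ev \<diamond> ?asc \<diamond> Mu xs (x \<odot>\<^sub>1 xs) \<diamond> (C2.Ide ?b \<oslash> FArr U1 coev (x \<odot>\<^sub>1 xs))
      \<diamond> (Mu xs U1)\<^sup>\<ddagger> \<diamond> (FArr (xs \<odot>\<^sub>1 U1) (run D1 xs) xs)\<^sup>\<ddagger>"
    using C2.acomp_rewrite4[OF Mu_asc_inv[of xs x xs]] x xs by (simp only: C2.acomp_assoc)
  also have "\<dots> = ?lun \<diamond> ?ev \<diamond> ?asc \<diamond> ?coev \<diamond> Mu xs U1 \<diamond> (Mu xs U1)\<^sup>\<ddagger>
      \<diamond> (FArr (xs \<odot>\<^sub>1 U1) (run D1 xs) xs)\<^sup>\<ddagger>"
    using C2.acomp_rewrite[OF Mu_natural_Ide_left[OF xs coev]] by (simp only: C2.acomp_assoc)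
  also have "\<dots> = ?lun \<diamond> ?ev \<diamond> ?asc \<diamond> ?coev \<diamond> ?run"
    using x xs coev unitary_Mu by (simp add: C2.unitary_cancel FArr_dag D1_in_hom)
  also have "\<dots> = FArr xs (cmp D1 (lun D1 xs) (cmp D1 (tnm D1 ev (idm D1 xs))
        (cmp D1 (dag D1 (asc D1 xs x xs))
        (cmp D1 (tnm D1 (idm D1 xs) coev) (dag D1 (run D1 xs)))))) xs"
    using x xs t by (intro FArr_cmp5[symmetric]) (auto intro: D1_in_hom)
  finally show ?thesis .
qed


lemma Br_image: "a \<in> Obj D1 \<Longrightarrow> b \<in> Obj D1 \<Longrightarrow>
    C2.Br (Fo a) (Fo b) = (Mu b a)\<^sup>\<ddagger> \<diamond> FArr (a \<odot>\<^sub>1 b) (brd D1 a b) (b \<odot>\<^sub>1 a) \<diamond> Mu a b"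
  using C2.unitary_cancel[of "(Mu b a)\<^sup>\<ddagger>" "C2.Br (Fo a) (Fo b)"] unitary_Mu[of b a] Mu_brd[of a b]
  by (simp add: C2.unitary_arr_intros C2.adag_adag)

lemma Mu_inv_natural_Ide_right:
  assumes "f \<in> Hom D1 a a'" "b \<in> Obj D1"
  shows "(Mu a' b)\<^sup>\<ddagger> \<diamond> FArr (a \<odot>\<^sub>1 b) (tnm D1 f (idm D1 b)) (a' \<odot>\<^sub>1 b)
    = (FArr a f a' \<oslash> C2.Ide (Fo b)) \<diamond> (Mu a b)\<^sup>\<ddagger>"
  by (rule C2.unitary_swap[OF _ _ _ _ _ _ _ _ Mu_natural_Ide_right[OF assms]])
    (use assms C1.hom_obj[OF assms(1)] C1.tnm_in_hom[OF assms(1) C1.ide_in_hom[OF assms(2)]]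
      in \<open>auto simp: unitary_Mu\<close>)

lemma Fcoev_parity_relation:
  assumes x: "x \<in> Obj D1" and xs: "xs \<in> Obj D1"
    and ev: "ev \<in> Hom D1 (xs \<odot>\<^sub>1 x) U1" and coev: "coev \<in> Hom D1 U1 (x \<odot>\<^sub>1 xs)"
    and P: "P \<in> Hom D1 x x"
    and r: "cmp D1 (brd D1 xs x) (dag D1 ev) = cmp D1 (tnm D1 P (idm D1 xs)) coev"
  shows "C2.Br (Fo xs) (Fo x) \<diamond> (Fev xs x ev)\<^sup>\<ddagger> = (FArr x P x \<oslash> C2.Ide (Fo xs)) \<diamond> Fcoev x xs coev"
proof -
  have t: "brd D1 xs x \<in> Hom D1 (xs \<odot>\<^sub>1 x) (x \<odot>\<^sub>1 xs)" "dag D1 ev \<in> Hom D1 U1 (xs \<odot>\<^sub>1 x)"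
    "tnm D1 P (idm D1 xs) \<in> Hom D1 (x \<odot>\<^sub>1 xs) (x \<odot>\<^sub>1 xs)"
    using x xs ev P by (auto intro: D1_in_hom)
  have "C2.Br (Fo xs) (Fo x) \<diamond> (Fev xs x ev)\<^sup>\<ddagger>
     = (Mu x xs)\<^sup>\<ddagger> \<diamond> FArr (xs \<odot>\<^sub>1 x) (brd D1 xs x) (x \<odot>\<^sub>1 xs) \<diamond> Mu xs x \<diamond> (Mu xs x)\<^sup>\<ddagger>
       \<diamond> (FArr (xs \<odot>\<^sub>1 x) ev U1)\<^sup>\<ddagger> \<diamond> Eps"
    unfolding Br_image[OF xs x] Fev_def by (simp add: C2.adag_acomp C2.adag_adag C2.acomp_assoc)
  also have "\<dots> = (Mu x xs)\<^sup>\<ddagger> \<diamond> FArr (xs \<odot>\<^sub>1 x) (brd D1 xs x) (x \<odot>\<^sub>1 xs)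
      \<diamond> FArr U1 (dag D1 ev) (xs \<odot>\<^sub>1 x) \<diamond> Eps"
    using unitary_Mu[of xs x] x xs ev by (simp add: C2.unitary_cancel FArr_dag)
  also have "\<dots> = (Mu x xs)\<^sup>\<ddagger> \<diamond> FArr (x \<odot>\<^sub>1 xs) (tnm D1 P (idm D1 xs)) (x \<odot>\<^sub>1 xs)
      \<diamond> FArr U1 coev (x \<odot>\<^sub>1 xs) \<diamond> Eps"
  proof -
    have "FArr (xs \<odot>\<^sub>1 x) (brd D1 xs x) (x \<odot>\<^sub>1 xs) \<diamond> FArr U1 (dag D1 ev) (xs \<odot>\<^sub>1 x)
      = FArr (x \<odot>\<^sub>1 xs) (tnm D1 P (idm D1 xs)) (x \<odot>\<^sub>1 xs) \<diamond> FArr U1 coev (x \<odot>\<^sub>1 xs)"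
      using t coev r by (simp flip: FArr_cmp)
    from C2.acomp_rewrite[OF this] show ?thesis
      by (simp only: C2.acomp_assoc)
  qed
  also have "\<dots> = (FArr x P x \<oslash> C2.Ide (Fo xs)) \<diamond> Fcoev x xs coev"
    unfolding Fcoev_def using C2.acomp_rewrite[OF Mu_inv_natural_Ide_right[OF P xs]]
    by (simp only: C2.acomp_assoc)
  finally show ?thesis .
qed

lemma arr_Fev:
  assumes "x \<in> Obj D1" "xs \<in> Obj D1" "ev \<in> Hom D1 (xs \<odot>\<^sub>1 x) U1"
  shows "C2.arr (Fev xs x ev)" "src (Fev xs x ev) = Fo xs \<odot>\<^sub>2 Fo x" "trg (Fev xs x ev) = U2"
  unfolding Fev_def using assms by simp_all
lemma arr_Fcoev:
  assumes "x \<in> Obj D1" "xs \<in> Obj D1" "coev \<in> Hom D1 U1 (x \<odot>\<^sub>1 xs)"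
  shows "C2.arr (Fcoev x xs coev)" "src (Fcoev x xs coev) = U2"
    "trg (Fcoev x xs coev) = Fo x \<odot>\<^sub>2 Fo xs"
  unfolding Fcoev_def using assms by simp_all

definition ev_image :: "'o \<Rightarrow> 'o \<Rightarrow> 'm \<Rightarrow> 'n" where
  "ev_image xs x ev = cmp D2 (dag D2 eps) (cmp D2 (Fm ev) (mu xs x))"
definition coev_image :: "'o \<Rightarrow> 'o \<Rightarrow> 'm \<Rightarrow> 'n" where
  "coev_image x xs coev = cmp D2 (dag D2 (mu x xs)) (cmp D2 (Fm coev) eps)"

lemma Fev_eq_Arr:
  assumes "x \<in> Obj D1" "xs \<in> Obj D1" "ev \<in> Hom D1 (xs \<odot>\<^sub>1 x) U1"
  shows "Fev xs x ev = C2.Arr (Fo xs \<odot>\<^sub>2 Fo x) (ev_image xs x ev) U2"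
proof -
  have "Fm ev \<in> Hom D2 (Fo (xs \<odot>\<^sub>1 x)) (Fo U1)" "mu xs x \<in> Hom D2 (Fo xs \<odot>\<^sub>2 Fo x) (Fo (xs \<odot>\<^sub>1 x))"
    "dag D2 eps \<in> Hom D2 (Fo U1) U2"
    using assms F_hom mu_in_hom eps_in_hom by auto
  then show ?thesis
    unfolding Fev_def ev_image_def Eps_def FArr_def Mu_def
    by (simp add: C2.adag_Arr C2.acomp_Arr eps_in_hom C2.cmp_in_hom)
qed

lemma Fcoev_eq_Arr:
  assumes "x \<in> Obj D1" "xs \<in> Obj D1" "coev \<in> Hom D1 U1 (x \<odot>\<^sub>1 xs)"
  shows "Fcoev x xs coev = C2.Arr U2 (coev_image x xs coev) (Fo x \<odot>\<^sub>2 Fo xs)"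
proof -
  have "Fm coev \<in> Hom D2 (Fo U1) (Fo (x \<odot>\<^sub>1 xs))"
    "dag D2 (mu x xs) \<in> Hom D2 (Fo (x \<odot>\<^sub>1 xs)) (Fo x \<odot>\<^sub>2 Fo xs)"
    "cmp D2 (Fm coev) eps \<in> Hom D2 U2 (Fo (x \<odot>\<^sub>1 xs))"
    using assms F_hom mu_in_hom eps_in_hom by auto
  then show ?thesis
    unfolding Fcoev_def coev_image_def Eps_def FArr_def Mu_def
    by (simp add: C2.adag_Arr C2.acomp_Arr eps_in_hom mu_in_hom assms C2.cmp_in_hom)
qed

lemma mor_Fev:
  assumes "x \<in> Obj D1" "xs \<in> Obj D1" "ev \<in> Hom D1 (xs \<odot>\<^sub>1 x) U1"
  shows "mor (Fev xs x ev) = ev_image xs x ev"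
  using Fev_eq_Arr[OF assms] arr_Fev[OF assms] by (metis C2.arr_Arr C2.mor_Arr)
lemma mor_Fcoev:
  assumes "x \<in> Obj D1" "xs \<in> Obj D1" "coev \<in> Hom D1 U1 (x \<odot>\<^sub>1 xs)"
  shows "mor (Fcoev x xs coev) = coev_image x xs coev"
  using Fcoev_eq_Arr[OF assms] arr_Fcoev[OF assms] by (metis C2.arr_Arr C2.mor_Arr)

lemma is_duality_image:
  assumes x: "x \<in> Obj D1" and d: "is_duality D1 x xs ev coev"
  shows "is_duality D2 (Fo x) (Fo xs) (ev_image xs x ev) (coev_image x xs coev)"
proof -
  have t: "xs \<in> Obj D1" "ev \<in> Hom D1 (xs \<odot>\<^sub>1 x) U1" "coev \<in> Hom D1 U1 (x \<odot>\<^sub>1 xs)"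
    using d unfolding is_duality_def by auto
  have "C2.duality (Fo x) (Fo xs) (Fev xs x ev) (Fcoev x xs coev)"
    unfolding C2.duality_def using x t d
    by (simp add: zigzag_image mate_image FArr_ide is_duality_def arr_Fev arr_Fcoev)
  then show ?thesis
    using x t by (simp add: C2.is_duality_iff_duality Fev_eq_Arr Fcoev_eq_Arr)
qed

lemma image_parity_relation:
  assumes x: "x \<in> Obj D1" and d: "is_duality D1 x xs ev coev" and P: "P \<in> Hom D1 x x"
    and r: "cmp D1 (brd D1 xs x) (dag D1 ev) = cmp D1 (tnm D1 P (idm D1 xs)) coev"
  shows "cmp D2 (brd D2 (Fo xs) (Fo x)) (dag D2 (ev_image xs x ev))
    = cmp D2 (tnm D2 (Fm P) (idm D2 (Fo xs))) (coev_image x xs coev)"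
proof -
  have t: "xs \<in> Obj D1" "ev \<in> Hom D1 (xs \<odot>\<^sub>1 x) U1" "coev \<in> Hom D1 U1 (x \<odot>\<^sub>1 xs)"
    using d unfolding is_duality_def by auto
  have "C2.Br (Fo xs) (Fo x) \<diamond> (Fev xs x ev)\<^sup>\<ddagger> = (FArr x P x \<oslash> C2.Ide (Fo xs)) \<diamond> Fcoev x xs coev"
    using Fcoev_parity_relation[OF x t P r] .
  then have "mor (C2.Br (Fo xs) (Fo x) \<diamond> (Fev xs x ev)\<^sup>\<ddagger>)
      = mor ((FArr x P x \<oslash> C2.Ide (Fo xs)) \<diamond> Fcoev x xs coev)"
    by simp
  then show ?thesis
    using x t P by (simp add: mor_simps arr_Fev arr_Fcoev mor_Fev mor_Fcoev)
qed

lemma F_par: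
  assumes x: "x \<in> Obj D1" and par1: "is_BZ2_action D1" and par2: "is_BZ2_action D2"
    and dx: "is_duality D1 x xs ev coev"
    and rx: "cmp D1 (brd D1 xs x) (dag D1 ev) = cmp D1 (tnm D1 (par D1 x) (idm D1 xs)) coev"
    and dy: "is_duality D2 (Fo x) ys ev' coev'"
    and ry: "cmp D2 (brd D2 ys (Fo x)) (dag D2 ev')
      = cmp D2 (tnm D2 (par D2 (Fo x)) (idm D2 ys)) coev'"
    and H: "\<forall>f. f \<in> Hom D2 ys ys \<and> cmp D2 f f = idm D2 ys \<and> iso_positive D2 f ys \<longrightarrow> f = idm D2 ys"
  shows "Fm (par D1 x) = par D2 (Fo x)"
proof -
  have P: "par D1 x \<in> Hom D1 x x" "Fm (par D1 x) \<in> Hom D2 (Fo x) (Fo x)"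
    using x par1 F_hom by (auto simp: BZ2_par_in_hom)
  show ?thesis
  proof (rule C2.parity_unique[OF dy is_duality_image[OF x dx]])
    show "cmp D2 (Fm (par D1 x)) (Fm (par D1 x)) = idm D2 (Fo x)"
      using x P par1 by (simp add: BZ2_par_involution F_ide flip: F_cmp)
    show "cmp D2 (Fm (par D1 x)) (par D2 (Fo x)) = cmp D2 (par D2 (Fo x)) (Fm (par D1 x))"
      using P par2 by (simp add: BZ2_par_natural)
    show "cmp D2 (brd D2 (Fo xs) (Fo x)) (dag D2 (ev_image xs x ev))
      = cmp D2 (tnm D2 (Fm (par D1 x)) (idm D2 (Fo xs))) (coev_image x xs coev)"
      by (rule image_parity_relation[OF x dx P(1) rx])
    show "\<forall>f. f \<in> Hom D2 ys ys \<and> cmp D2 f f = idm D2 ys \<and> iso_positive D2 f ys \<longrightarrow> f = idm D2 ys"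
      by (fact H)
  qed (use x P par2 ry in \<open>simp_all add: BZ2_par_in_hom BZ2_par_involution\<close>)
qed

end

theorem mainTheorem3:
  fixes D1 :: "('o, 'm) dcat" and D2 :: "('p, 'n) dcat"
    and Fo :: "'o \<Rightarrow> 'p" and Fm :: "'m \<Rightarrow> 'n"
    and mu :: "'o \<Rightarrow> 'o \<Rightarrow> 'n" and eps :: 'n
  assumes "is_fermionically_dagger_compact D1"
    and "is_fermionically_dagger_compact D2"
    and "is_sym_monoidal_dagger_functor D1 D2 Fo Fm mu eps"
    and "\<forall>c \<in> Obj D2. \<forall>f. f \<in> Hom D2 c c \<and> cmp D2 f f = idm D2 c \<and> iso_positive D2 f c
           \<longrightarrow> f = idm D2 c"
  shows "\<forall>x \<in> Obj D1. Fm (par D1 x) = par D2 (Fo x)"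
proof
  fix x assume x: "x \<in> Obj D1"
  interpret sm_dagger_functor D1 D2 Fo Fm mu eps
    using assms(1-3) unfolding is_fermionically_dagger_compact_def
    by (intro sm_dagger_functor.intro sm_dagger.intro sm_dagger_functor_axioms.intro) auto
  have par: "is_BZ2_action D1" "is_BZ2_action D2"
    using assms(1,2) unfolding is_fermionically_dagger_compact_def by auto
  obtain xs ev coev where dx: "is_duality D1 x xs ev coev"
    and rx: "cmp D1 (brd D1 xs x) (dag D1 ev) = cmp D1 (tnm D1 (par D1 x) (idm D1 xs)) coev"
    using assms(1) x unfolding is_fermionically_dagger_compact_def by blast
  obtain ys ev' coev' where dy: "is_duality D2 (Fo x) ys ev' coev'"
    and ry: "cmp D2 (brd D2 ys (Fo x)) (dag D2 ev')
      = cmp D2 (tnm D2 (par D2 (Fo x)) (idm D2 ys)) coev'"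
    using assms(2) F_obj[OF x] unfolding is_fermionically_dagger_compact_def by blast
  have "ys \<in> Obj D2"
    using dy unfolding is_duality_def by blast
  with assms(4) show "Fm (par D1 x) = par D2 (Fo x)"
    by (intro F_par[OF x par dx rx dy ry]) blast
qed

end
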